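(* A geodesic metric space $X$ is asymptotically CAT(0) if and only if there exists a function $f:\mathbb{R}_+\to\mathbb{R}_+$ with $\lim_{r\to\infty} f(r)/r=0$ such that for every $r>0$, every ball of radius $r$ in $X$ is $f(r)$-CAT(0).
   Context: A metric space is asymptotically CAT(0) if all of its asymptotic cones (for all non-principal ultrafilters, all scaling sequences $a_n\to\infty$ and all base point sequences) are CAT(0). For a geodesic triangle $\triangle$ in $X$ with Euclidean comparison triangle $\bar\triangle$ (same side lengths), and $\delta\ge 0$, $\triangle$ satisfies the $\delta$-CAT(0) inequality if $d(p,q)\le d(\bar p,\bar q)+\delta$ for all $p,q\in\triangle$ with comparison points $\bar p,\bar q\in\bar\triangle$. "A ball of radius $r$ is $\delta$-CAT(0)" means: every geodesic triangle in $X$ whose vertices lie in that ball satisfies the $\delta$-CAT(0) inequality (balls are not assumed convex; geodesic sides may leave the ball). *)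

theory Defs
  imports "HOL-Analysis.Analysis"
begin

definition geodesic_seg :: "'b set \<Rightarrow> ('b \<Rightarrow> 'b \<Rightarrow> real) \<Rightarrow> (real \<Rightarrow> 'b) \<Rightarrow> 'b \<Rightarrow> 'b \<Rightarrow> bool" where
  "geodesic_seg M d \<gamma> x y \<longleftrightarrow>
     \<gamma> 0 = x \<and> \<gamma> (d x y) = y \<and> \<gamma> ` {0..d x y} \<subseteq> M \<and>
     (\<forall>s\<in>{0..d x y}. \<forall>t\<in>{0..d x y}. d (\<gamma> s) (\<gamma> t) = \<bar>s - t\<bar>)"

definition geodesic_space :: "'b set \<Rightarrow> ('b \<Rightarrow> 'b \<Rightarrow> real) \<Rightarrow> bool" where
  "geodesic_space M d \<longleftrightarrow> (\<forall>x\<in>M. \<forall>y\<in>M. \<exists>\<gamma>. geodesic_seg M d \<gamma> x y)"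

definition cmp_pt :: "real^2 \<Rightarrow> real^2 \<Rightarrow> real \<Rightarrow> real^2" where
  "cmp_pt A B s = A + (s / dist A B) *\<^sub>R (B - A)"

definition delta_cat0_triangle ::
  "'b set \<Rightarrow> ('b \<Rightarrow> 'b \<Rightarrow> real) \<Rightarrow> real \<Rightarrow> 'b \<Rightarrow> 'b \<Rightarrow> 'b \<Rightarrow>
   (real \<Rightarrow> 'b) \<Rightarrow> (real \<Rightarrow> 'b) \<Rightarrow> (real \<Rightarrow> 'b) \<Rightarrow> bool" where
  "delta_cat0_triangle M d \<delta> x1 x2 x3 g1 g2 g3 \<longleftrightarrow>
     (\<forall>P1 P2 P3 :: real^2.
        dist P1 P2 = d x1 x2 \<and> dist P2 P3 = d x2 x3 \<and> dist P3 P1 = d x3 x1 \<longrightarrow>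
        (\<forall>(g, A, B) \<in> {(g1, P1, P2), (g2, P2, P3), (g3, P3, P1)}.
         \<forall>(g', A', B') \<in> {(g1, P1, P2), (g2, P2, P3), (g3, P3, P1)}.
         \<forall>s\<in>{0..dist A B}. \<forall>t\<in>{0..dist A' B'}.
            d (g s) (g' t) \<le> dist (cmp_pt A B s) (cmp_pt A' B' t) + \<delta>))"

text \<open>Every geodesic triangle with vertices in V satisfies the delta-CAT(0) inequality
  (sides are geodesics in M, they may leave V).\<close>
definition delta_cat0_on :: "'b set \<Rightarrow> ('b \<Rightarrow> 'b \<Rightarrow> real) \<Rightarrow> real \<Rightarrow> 'b set \<Rightarrow> bool" where
  "delta_cat0_on M d \<delta> V \<longleftrightarrow>
     (\<forall>x1\<in>V. \<forall>x2\<in>V. \<forall>x3\<in>V. \<forall>g1 g2 g3.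
        geodesic_seg M d g1 x1 x2 \<and> geodesic_seg M d g2 x2 x3 \<and> geodesic_seg M d g3 x3 x1 \<longrightarrow>
        delta_cat0_triangle M d \<delta> x1 x2 x3 g1 g2 g3)"

definition CAT0_space :: "'b set \<Rightarrow> ('b \<Rightarrow> 'b \<Rightarrow> real) \<Rightarrow> bool" where
  "CAT0_space M d \<longleftrightarrow> geodesic_space M d \<and> delta_cat0_on M d 0 M"

definition ultrafilter :: "'i filter \<Rightarrow> bool" where
  "ultrafilter U \<longleftrightarrow> U \<noteq> bot \<and> (\<forall>P. eventually P U \<or> eventually (\<lambda>x. \<not> P x) U)"

definition nonprincipal :: "'i filter \<Rightarrow> bool" where
  "nonprincipal U \<longleftrightarrow> (\<forall>i. eventually (\<lambda>j. j \<noteq> i) U)"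

definition cone_seqs :: "nat filter \<Rightarrow> (nat \<Rightarrow> real) \<Rightarrow> (nat \<Rightarrow> 'a::metric_space) \<Rightarrow> (nat \<Rightarrow> 'a) set" where
  "cone_seqs U a e = {x. \<exists>B. eventually (\<lambda>n. dist (x n) (e n) / a n \<le> B) U}"

definition cone_pdist :: "nat filter \<Rightarrow> (nat \<Rightarrow> real) \<Rightarrow> (nat \<Rightarrow> 'a::metric_space) \<Rightarrow> (nat \<Rightarrow> 'a) \<Rightarrow> real" where
  "cone_pdist U a x y = Lim U (\<lambda>n. dist (x n) (y n) / a n)"

definition cone_pts :: "nat filter \<Rightarrow> (nat \<Rightarrow> real) \<Rightarrow> (nat \<Rightarrow> 'a::metric_space) \<Rightarrow> (nat \<Rightarrow> 'a) set set" where
  "cone_pts U a e = (\<lambda>x. {y \<in> cone_seqs U a e. cone_pdist U a x y = 0}) ` cone_seqs U a e"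

definition cone_dist :: "nat filter \<Rightarrow> (nat \<Rightarrow> real) \<Rightarrow> (nat \<Rightarrow> 'a::metric_space) set \<Rightarrow> (nat \<Rightarrow> 'a) set \<Rightarrow> real" where
  "cone_dist U a P Q = cone_pdist U a (SOME x. x \<in> P) (SOME y. y \<in> Q)"

definition asymptotically_CAT0 :: "'a::metric_space itself \<Rightarrow> bool" where
  "asymptotically_CAT0 (_ :: 'a itself) \<longleftrightarrow>
     (\<forall>(U :: nat filter) (a :: nat \<Rightarrow> real) (e :: nat \<Rightarrow> 'a).
        ultrafilter U \<and> nonprincipal U \<and> (\<forall>n. 0 < a n) \<and> filterlim a at_top sequentially \<longrightarrow>
        CAT0_space (cone_pts U a e) (cone_dist U a))"

end

theory Submission
  imports Defs
begin

text \<open>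
  Sufficiency: if balls are \<open>f r\<close>-CAT(0) with \<open>f r = o(r)\<close>, rescaling turns the defect into
  \<open>o(1)\<close>.  This forces every cone geodesic to be an ultralimit of geodesics of \<open>X\<close>
  (\<open>cone_geodesic_eq\<close>) and every ultralimit triangle to satisfy the CAT(0) inequality
  (\<open>pd_geo_pt_cat0\<close>), whence the cone is CAT(0) (\<open>cone_CAT0\<close>).

  Necessity: take for \<open>f r\<close> the optimal defect \<open>cat0_defect\<close> (finite, since balls are trivially
  \<open>6 r\<close>-CAT(0)).  If it were not sublinear, triangles in balls of radii \<open>r n \<rightarrow> \<infinity>\<close>
  would violate the inequality by \<open>\<epsilon> r n\<close>; in the asymptotic cone centred at the balls and
  scaled by \<open>r n\<close> this violation persists (\<open>violation_limit\<close>), contradicting CAT(0)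
  (\<open>no_linear_violation\<close>).
\<close>

section \<open>Comparison triangles\<close>

text \<open>The three sides of a triangle with vertices \<open>x1 x2 x3\<close> are indexed by \<open>k < 3\<close>:
  side \<open>k\<close> runs from \<open>sel3 k x1 x2 x3\<close> to \<open>sel3 k x2 x3 x1\<close>, is parametrized by
  \<open>sel3 k g1 g2 g3\<close> and has length \<open>sel3 k l1 l2 l3\<close>.\<close>
definition sel3 :: "nat \<Rightarrow> 'x \<Rightarrow> 'x \<Rightarrow> 'x \<Rightarrow> 'x" where
  "sel3 k p q r = (if k = 0 then p else if k = 1 then q else r)"

lemma less_3_cases: "(k::nat) < 3 \<longleftrightarrow> k = 0 \<or> k = 1 \<or> k = 2"
  by auto

lemma sel3_simps [simp]: "sel3 0 p q r = p" "sel3 (Suc 0) p q r = q" "sel3 2 p q r = r"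
  unfolding sel3_def by auto

lemma sel3_in: "p \<in> A \<Longrightarrow> q \<in> A \<Longrightarrow> r \<in> A \<Longrightarrow> sel3 k p q r \<in> A"
  unfolding sel3_def by auto

lemma sel3_apply: "sel3 k f g h x = sel3 k (f x) (g x) (h x)"
  unfolding sel3_def by auto

lemma sel3_comp: "sel3 k (F p q) (F q r) (F r p) = F (sel3 k p q r) (sel3 k q r p)"
  unfolding sel3_def by auto

lemma sel3_map: "sel3 k (F p) (F q) (F r) = F (sel3 k p q r)"
  unfolding sel3_def by auto

lemma sel3_divide: "sel3 k p q r / (c::real) = sel3 k (p / c) (q / c) (r / c)"
  unfolding sel3_def by auto

lemma sel3_nonneg: "0 \<le> p \<Longrightarrow> 0 \<le> q \<Longrightarrow> 0 \<le> (r::real) \<Longrightarrow> 0 \<le> sel3 k p q r"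
  unfolding sel3_def by auto

lemma sel3_le_sum: "0 \<le> p \<Longrightarrow> 0 \<le> q \<Longrightarrow> 0 \<le> (r::real) \<Longrightarrow> sel3 k p q r \<le> p + q + r"
  unfolding sel3_def by auto

lemma tendsto_sel3: "(f \<longlongrightarrow> p) F \<Longrightarrow> (g \<longlongrightarrow> q) F \<Longrightarrow> (h \<longlongrightarrow> r) F \<Longrightarrow>
  ((\<lambda>n. sel3 k (f n) (g n) (h n)) \<longlongrightarrow> sel3 k p q r) F"
  unfolding sel3_def by auto

lemma geodesic_seg_sel3:
  assumes "k < 3" "geodesic_seg M d g1 x1 x2" "geodesic_seg M d g2 x2 x3" "geodesic_seg M d g3 x3 x1"
  shows "geodesic_seg M d (sel3 k g1 g2 g3) (sel3 k x1 x2 x3) (sel3 k x2 x3 x1)"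
  using assms unfolding less_3_cases by auto

lemma geodesic_seg_sel3_seq:
  assumes "k < 3" "\<And>n. geodesic_seg M d (G1 n) (x1 n) (x2 n)" "\<And>n. geodesic_seg M d (G2 n) (x2 n) (x3 n)"
    "\<And>n. geodesic_seg M d (G3 n) (x3 n) (x1 n)"
  shows "geodesic_seg M d (sel3 k G1 G2 G3 n) (sel3 k x1 x2 x3 n) (sel3 k x2 x3 x1 n)"
  using geodesic_seg_sel3[OF assms(1) assms(2-4)[of n]]
  by (simp only: sel3_apply[of k G1 G2 G3 n] sel3_apply[of k x1 x2 x3 n] sel3_apply[of k x2 x3 x1 n])

text \<open>The point at fraction \<open>u\<close> of side \<open>k\<close> of a Euclidean triangle is an affine combination of
  the vertices; \<open>side_weight i k u\<close> is the weight of vertex \<open>i\<close>.\<close>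
definition side_weight :: "nat \<Rightarrow> nat \<Rightarrow> real \<Rightarrow> real" where
  "side_weight i k u = (if i = k then 1 - u else if i = Suc k mod 3 then u else 0)"

text \<open>Squared distance between the points at fractions \<open>u\<close> of side \<open>k\<close> and \<open>v\<close> of side \<open>k'\<close>
  of a Euclidean triangle with side lengths \<open>l1 l2 l3\<close>; it depends only on the side lengths.\<close>
definition cmp_sqdist :: "real \<Rightarrow> real \<Rightarrow> real \<Rightarrow> nat \<Rightarrow> real \<Rightarrow> nat \<Rightarrow> real \<Rightarrow> real" where
  "cmp_sqdist l1 l2 l3 k u k' v =
    (let w0 = side_weight 0 k u - side_weight 0 k' v; w1 = side_weight 1 k u - side_weight 1 k' v;
         w2 = side_weight 2 k u - side_weight 2 k' v
     in - (w0 * w1 * l1\<^sup>2 + w1 * w2 * l2\<^sup>2 + w2 * w0 * l3\<^sup>2))"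

text \<open>The comparison distance between the points at arclength \<open>s\<close> on side \<open>k\<close> and \<open>t\<close> on side
  \<open>k'\<close>: the right-hand side of the CAT(0) inequality, expressed through the side lengths.\<close>
definition cmp_bound :: "real \<Rightarrow> real \<Rightarrow> real \<Rightarrow> nat \<Rightarrow> real \<Rightarrow> nat \<Rightarrow> real \<Rightarrow> real" where
  "cmp_bound l1 l2 l3 k s k' t =
     sqrt (cmp_sqdist l1 l2 l3 k (s / sel3 k l1 l2 l3) k' (t / sel3 k' l1 l2 l3))"

lemma norm_zero_sum_combination:
  fixes P1 P2 P3 :: "'v::real_inner"
  assumes "w0 + w1 + w2 = 0"
  shows "(norm (w0 *\<^sub>R P1 + w1 *\<^sub>R P2 + w2 *\<^sub>R P3))\<^sup>2 =
    - (w0 * w1 * (dist P1 P2)\<^sup>2 + w1 * w2 * (dist P2 P3)\<^sup>2 + w2 * w0 * (dist P3 P1)\<^sup>2)"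
proof -
  define u where "u = P1 - P3"
  define v where "v = P2 - P3"
  have w2: "w2 = - w0 - w1" using assms by simp
  have comb: "w0 *\<^sub>R P1 + w1 *\<^sub>R P2 + w2 *\<^sub>R P3 = w0 *\<^sub>R u + w1 *\<^sub>R v"
    unfolding u_def v_def w2 by (simp add: algebra_simps)
  have "P1 - P2 = u - v" unfolding u_def v_def by simp
  then have d12: "(dist P1 P2)\<^sup>2 = u \<bullet> u + v \<bullet> v - 2 * (u \<bullet> v)"
    unfolding dist_norm power2_norm_eq_inner by (simp add: inner_diff_left inner_diff_right inner_commute)
  have d23: "(dist P2 P3)\<^sup>2 = v \<bullet> v" and d31: "(dist P3 P1)\<^sup>2 = u \<bullet> u"
    unfolding u_def v_def by (simp_all add: dist_commute dist_norm power2_norm_eq_inner)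
  have "(norm (w0 *\<^sub>R P1 + w1 *\<^sub>R P2 + w2 *\<^sub>R P3))\<^sup>2 = (norm (w0 *\<^sub>R u + w1 *\<^sub>R v))\<^sup>2"
    by (simp only: comb)
  also have "\<dots> = w0\<^sup>2 * (u \<bullet> u) + w1\<^sup>2 * (v \<bullet> v) + 2 * w0 * w1 * (u \<bullet> v)"
    unfolding power2_norm_eq_inner
    by (simp add: inner_add_left inner_add_right inner_commute power2_eq_square algebra_simps)
  also have "\<dots> = - (w0 * w1 * (dist P1 P2)\<^sup>2 + w1 * w2 * (dist P2 P3)\<^sup>2 + w2 * w0 * (dist P3 P1)\<^sup>2)"
    unfolding d12 d23 d31 w2 by (simp add: algebra_simps power2_eq_square)
  finally show ?thesis .
qed

lemma cmp_pt_side_weights: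
  fixes P1 P2 P3 :: "real^2"
  assumes "k < 3" "u = s / dist (sel3 k P1 P2 P3) (sel3 k P2 P3 P1)"
  shows "cmp_pt (sel3 k P1 P2 P3) (sel3 k P2 P3 P1) s =
    side_weight 0 k u *\<^sub>R P1 + side_weight 1 k u *\<^sub>R P2 + side_weight 2 k u *\<^sub>R P3"
  using assms unfolding less_3_cases cmp_pt_def side_weight_def
  by (elim disjE) (simp_all add: scaleR_diff_right scaleR_diff_left algebra_simps)

lemma dist_cmp_pt:
  fixes P1 P2 P3 :: "real^2"
  assumes "k < 3" "k' < 3"
  shows "dist (cmp_pt (sel3 k P1 P2 P3) (sel3 k P2 P3 P1) s) (cmp_pt (sel3 k' P1 P2 P3) (sel3 k' P2 P3 P1) t)
    = cmp_bound (dist P1 P2) (dist P2 P3) (dist P3 P1) k s k' t"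
proof -
  define u where "u = s / sel3 k (dist P1 P2) (dist P2 P3) (dist P3 P1)"
  define v where "v = t / sel3 k' (dist P1 P2) (dist P2 P3) (dist P3 P1)"
  define w where "w i = side_weight i k u - side_weight i k' v" for i
  have sum: "w 0 + w 1 + w 2 = 0"
    using assms unfolding w_def side_weight_def less_3_cases by (elim disjE) simp_all
  have "dist (cmp_pt (sel3 k P1 P2 P3) (sel3 k P2 P3 P1) s) (cmp_pt (sel3 k' P1 P2 P3) (sel3 k' P2 P3 P1) t)
     = norm (w 0 *\<^sub>R P1 + w 1 *\<^sub>R P2 + w 2 *\<^sub>R P3)"
  proof -
    have u: "u = s / dist (sel3 k P1 P2 P3) (sel3 k P2 P3 P1)"
      and v: "v = t / dist (sel3 k' P1 P2 P3) (sel3 k' P2 P3 P1)"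
      unfolding u_def v_def sel3_comp[of k dist] sel3_comp[of k' dist] by simp_all
    show ?thesis
      unfolding cmp_pt_side_weights[OF assms(1) u] cmp_pt_side_weights[OF assms(2) v] dist_norm w_def
      by (simp add: scaleR_diff_left algebra_simps)
  qed
  also have "\<dots> = sqrt (cmp_sqdist (dist P1 P2) (dist P2 P3) (dist P3 P1) k u k' v)"
    using norm_zero_sum_combination[OF sum, of P1 P2 P3]
    unfolding cmp_sqdist_def Let_def w_def by (metis norm_ge_zero real_sqrt_abs abs_of_nonneg)
  finally show ?thesis
    unfolding cmp_bound_def u_def v_def .
qed

lemma dist_cmp_pt_same_side: "dist (cmp_pt A B s) (cmp_pt A B \<sigma>) \<le> \<bar>s - \<sigma>\<bar>"
proof (cases "dist A B = 0")
  case False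
  have "cmp_pt A B s - cmp_pt A B \<sigma> = ((s - \<sigma>) / dist A B) *\<^sub>R (B - A)"
    unfolding cmp_pt_def by (simp add: algebra_simps diff_divide_distrib)
  then show ?thesis
    using False by (simp add: dist_norm abs_div norm_minus_commute)
qed (simp add: cmp_pt_def)

lemma comparison_triangle_exists:
  fixes l1 l2 l3 :: real
  assumes "0 \<le> l1" "0 \<le> l3" "l1 \<le> l2 + l3" "l2 \<le> l1 + l3" "l3 \<le> l1 + l2"
  shows "\<exists>P1 P2 P3 :: real^2. dist P1 P2 = l1 \<and> dist P2 P3 = l2 \<and> dist P3 P1 = l3"
proof -
  define e1 :: "real^2" where "e1 = axis 1 1"
  define e2 :: "real^2" where "e2 = axis 2 1"
  have nrm: "norm (x *\<^sub>R e1 + y *\<^sub>R e2) = sqrt (x\<^sup>2 + y\<^sup>2)" for x y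
    unfolding norm_eq_sqrt_inner e1_def e2_def
    by (simp add: inner_add_left inner_add_right inner_axis_axis power2_eq_square)
  show ?thesis
  proof (cases "l1 = 0")
    case True
    then show ?thesis
      using nrm[of l3 0] nrm[of "-l3" 0] assms
      by (intro exI[of _ 0] exI[of _ "l3 *\<^sub>R e1"]) (auto simp: dist_norm)
  next
    case False
    then have l1: "l1 > 0" using assms by auto
    text \<open>Place the third vertex at \<open>(x, y)\<close> over the side \<open>[0, l1]\<close> of the first axis.\<close>
    define x where "x = (l1\<^sup>2 + l3\<^sup>2 - l2\<^sup>2) / (2 * l1)"
    have "l2\<^sup>2 \<le> (l1 + l3)\<^sup>2" "\<bar>l1 - l3\<bar>\<^sup>2 \<le> l2\<^sup>2"
      using assms by (intro power_mono; simp)+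
    then have "\<bar>l1\<^sup>2 + l3\<^sup>2 - l2\<^sup>2\<bar> \<le> 2 * l1 * l3"
      unfolding abs_le_iff by (simp add: power2_eq_square algebra_simps)
    then have "\<bar>x\<bar> \<le> l3"
      unfolding x_def using l1 by (simp add: abs_div divide_le_eq mult.commute mult.left_commute)
    then have "x\<^sup>2 \<le> l3\<^sup>2" by (metis abs_le_square_iff abs_of_nonneg assms(2))
    define y where "y = sqrt (l3\<^sup>2 - x\<^sup>2)"
    have y2: "y\<^sup>2 = l3\<^sup>2 - x\<^sup>2" unfolding y_def using \<open>x\<^sup>2 \<le> l3\<^sup>2\<close> by simp
    have x: "2 * l1 * x = l1\<^sup>2 + l3\<^sup>2 - l2\<^sup>2" unfolding x_def using l1 by simp
    have "dist (l1 *\<^sub>R e1) (x *\<^sub>R e1 + y *\<^sub>R e2) = norm ((l1 - x) *\<^sub>R e1 + (- y) *\<^sub>R e2)"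
      unfolding dist_norm by (simp add: algebra_simps)
    also have "\<dots> = sqrt ((l1 - x)\<^sup>2 + y\<^sup>2)"
      unfolding nrm by simp
    also have "(l1 - x)\<^sup>2 + y\<^sup>2 = l2\<^sup>2"
      using y2 x by (simp add: power2_eq_square algebra_simps)
    finally have "dist (l1 *\<^sub>R e1) (x *\<^sub>R e1 + y *\<^sub>R e2) = l2"
      using assms by simp
    moreover have "dist 0 (l1 *\<^sub>R e1) = l1" "dist (x *\<^sub>R e1 + y *\<^sub>R e2) 0 = l3"
      using nrm[of l1 0] nrm[of x y] y2 assms by (simp_all add: dist_norm)
    ultimately show ?thesis by blast
  qed
qed

lemma cmp_bound_perturb:
  assumes "k < 3" "k' < 3" "0 \<le> l1" "0 \<le> l3" "l1 \<le> l2 + l3" "l2 \<le> l1 + l3" "l3 \<le> l1 + l2"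
  shows "cmp_bound l1 l2 l3 k \<sigma> k' \<tau> \<le> cmp_bound l1 l2 l3 k s k' t + \<bar>s - \<sigma>\<bar> + \<bar>t - \<tau>\<bar>"
proof -
  obtain P1 P2 P3 :: "real^2" where P: "dist P1 P2 = l1" "dist P2 P3 = l2" "dist P3 P1 = l3"
    using comparison_triangle_exists[OF assms(3-)] by blast
  define A where "A = cmp_pt (sel3 k P1 P2 P3) (sel3 k P2 P3 P1)"
  define B where "B = cmp_pt (sel3 k' P1 P2 P3) (sel3 k' P2 P3 P1)"
  have "dist (A \<sigma>) (B \<tau>) \<le> dist (A \<sigma>) (A s) + dist (A s) (B t) + dist (B t) (B \<tau>)"
    by (metis add.commute add_left_mono dist_triangle order_trans)
  also have "\<dots> \<le> dist (A s) (B t) + \<bar>s - \<sigma>\<bar> + \<bar>t - \<tau>\<bar>"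
  proof -
    have "dist (A \<sigma>) (A s) \<le> \<bar>s - \<sigma>\<bar>" "dist (B t) (B \<tau>) \<le> \<bar>t - \<tau>\<bar>"
      unfolding A_def B_def by (metis dist_cmp_pt_same_side abs_minus_commute)+
    then show ?thesis by linarith
  qed
  moreover have "dist (A \<sigma>) (B \<tau>) = cmp_bound l1 l2 l3 k \<sigma> k' \<tau>"
    "dist (A s) (B t) = cmp_bound l1 l2 l3 k s k' t"
    unfolding A_def B_def dist_cmp_pt[OF assms(1,2)] P by simp_all
  ultimately show ?thesis by simp
qed

lemma cmp_bound_scale:
  assumes "(c::real) > 0"
  shows "cmp_bound (l1 / c) (l2 / c) (l3 / c) k (s / c) k' (t / c) = cmp_bound l1 l2 l3 k s k' t / c"
proof -
  have "- (p * (x / c)\<^sup>2 + q * (y / c)\<^sup>2 + r * (z / c)\<^sup>2) = - (p * x\<^sup>2 + q * y\<^sup>2 + r * z\<^sup>2) / c\<^sup>2"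
    for p q r x y z :: real
    using assms by (simp add: power_divide field_simps)
  then have "cmp_sqdist (l1 / c) (l2 / c) (l3 / c) k u k' v = cmp_sqdist l1 l2 l3 k u k' v / c\<^sup>2" for u v
    unfolding cmp_sqdist_def Let_def .
  moreover have "sel3 k (l1 / c) (l2 / c) (l3 / c) = sel3 k l1 l2 l3 / c" for k
    unfolding sel3_divide ..
  ultimately have "cmp_bound (l1 / c) (l2 / c) (l3 / c) k (s / c) k' (t / c) =
      sqrt (cmp_sqdist l1 l2 l3 k (s / sel3 k l1 l2 l3) k' (t / sel3 k' l1 l2 l3) / c\<^sup>2)"
    unfolding cmp_bound_def using assms by simp
  also have "\<dots> = cmp_bound l1 l2 l3 k s k' t / c"
    unfolding cmp_bound_def using assms by (simp add: real_sqrt_divide)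
  finally show ?thesis .
qed

lemma tendsto_cmp_sqdist:
  assumes "(l1 \<longlongrightarrow> m1) F" "(l2 \<longlongrightarrow> m2) F" "(l3 \<longlongrightarrow> m3) F" "(u \<longlongrightarrow> u0) F" "(v \<longlongrightarrow> v0) F"
  shows "((\<lambda>n. cmp_sqdist (l1 n) (l2 n) (l3 n) k (u n) k' (v n)) \<longlongrightarrow> cmp_sqdist m1 m2 m3 k u0 k' v0) F"
proof -
  have sw: "((\<lambda>n. side_weight i k (w n)) \<longlongrightarrow> side_weight i k w0) F" if "(w \<longlongrightarrow> w0) F" for i k w w0
    unfolding side_weight_def using that by (auto intro!: tendsto_intros)
  show ?thesis
    unfolding cmp_sqdist_def Let_def by (intro tendsto_intros sw assms)
qed

text \<open>The \<open>\<delta>\<close>-CAT(0) inequality for a triangle, with the comparison distances computed from the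
  side lengths (so no Euclidean comparison triangle has to be chosen).\<close>
definition delta_cat0_sides ::
  "('b \<Rightarrow> 'b \<Rightarrow> real) \<Rightarrow> real \<Rightarrow> 'b \<Rightarrow> 'b \<Rightarrow> 'b \<Rightarrow> (real \<Rightarrow> 'b) \<Rightarrow> (real \<Rightarrow> 'b) \<Rightarrow> (real \<Rightarrow> 'b) \<Rightarrow> bool"
where
  "delta_cat0_sides d \<delta> x1 x2 x3 g1 g2 g3 \<longleftrightarrow>
     (\<forall>k<3. \<forall>k'<3. \<forall>s\<in>{0..sel3 k (d x1 x2) (d x2 x3) (d x3 x1)}. \<forall>t\<in>{0..sel3 k' (d x1 x2) (d x2 x3) (d x3 x1)}.
        d (sel3 k g1 g2 g3 s) (sel3 k' g1 g2 g3 t) \<le> cmp_bound (d x1 x2) (d x2 x3) (d x3 x1) k s k' t + \<delta>)"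

lemma delta_cat0_sidesD:
  assumes "delta_cat0_sides d \<delta> x1 x2 x3 g1 g2 g3" "k < 3" "k' < 3"
    "s \<in> {0..sel3 k (d x1 x2) (d x2 x3) (d x3 x1)}" "t \<in> {0..sel3 k' (d x1 x2) (d x2 x3) (d x3 x1)}"
  shows "d (sel3 k g1 g2 g3 s) (sel3 k' g1 g2 g3 t) \<le> cmp_bound (d x1 x2) (d x2 x3) (d x3 x1) k s k' t + \<delta>"
  using assms unfolding delta_cat0_sides_def by blast

lemma ball_sides:
  "(\<forall>x\<in>{(g1, P1, P2), (g2, P2, P3), (g3, P3, P1)}. Q x) \<longleftrightarrow>
   (\<forall>k<3. Q (sel3 k g1 g2 g3, sel3 k P1 P2 P3, sel3 k P2 P3 P1))"
  unfolding less_3_cases sel3_def by auto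

text \<open>A triangle satisfies the \<open>\<delta>\<close>-CAT(0) inequality iff its side-length form holds, as soon as
  one comparison triangle exists (otherwise the inequality is vacuous).\<close>
lemma delta_cat0_triangle_iff:
  "delta_cat0_triangle M d \<delta> x1 x2 x3 g1 g2 g3 \<longleftrightarrow>
   (\<forall>P1 P2 P3 :: real^2. dist P1 P2 = d x1 x2 \<and> dist P2 P3 = d x2 x3 \<and> dist P3 P1 = d x3 x1 \<longrightarrow>
      delta_cat0_sides d \<delta> x1 x2 x3 g1 g2 g3)"
proof -
  have "(\<forall>k<3. \<forall>k'<3. \<forall>s\<in>{0..dist (sel3 k P1 P2 P3) (sel3 k P2 P3 P1)}.
          \<forall>t\<in>{0..dist (sel3 k' P1 P2 P3) (sel3 k' P2 P3 P1)}.
          d (sel3 k g1 g2 g3 s) (sel3 k' g1 g2 g3 t) \<le>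
          dist (cmp_pt (sel3 k P1 P2 P3) (sel3 k P2 P3 P1) s) (cmp_pt (sel3 k' P1 P2 P3) (sel3 k' P2 P3 P1) t) + \<delta>)
      \<longleftrightarrow> delta_cat0_sides d \<delta> x1 x2 x3 g1 g2 g3"
    if "dist P1 P2 = d x1 x2" "dist P2 P3 = d x2 x3" "dist P3 P1 = d x3 x1" for P1 P2 P3 :: "real^2"
    unfolding delta_cat0_sides_def using that by (simp add: dist_cmp_pt sel3_comp[of _ dist, symmetric])
  then show ?thesis
    unfolding delta_cat0_triangle_def ball_sides prod.case by blast
qed

lemma delta_cat0_triangleI:
  "delta_cat0_sides d \<delta> x1 x2 x3 g1 g2 g3 \<Longrightarrow> delta_cat0_triangle M d \<delta> x1 x2 x3 g1 g2 g3"
  unfolding delta_cat0_triangle_iff by blast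

lemma delta_cat0_triangleD:
  assumes "delta_cat0_triangle M d \<delta> x1 x2 x3 g1 g2 g3"
    and "0 \<le> d x1 x2" "0 \<le> d x3 x1" "d x1 x2 \<le> d x2 x3 + d x3 x1" "d x2 x3 \<le> d x1 x2 + d x3 x1"
      "d x3 x1 \<le> d x1 x2 + d x2 x3"
  shows "delta_cat0_sides d \<delta> x1 x2 x3 g1 g2 g3"
  using assms comparison_triangle_exists[OF assms(2-)] unfolding delta_cat0_triangle_iff by blast

lemma metric_triangle_ineqs:
  fixes x y z :: "'a::metric_space"
  shows "dist x y \<le> dist y z + dist z x" "dist y z \<le> dist x y + dist z x" "dist z x \<le> dist x y + dist y z"
  by (metis dist_commute dist_triangle add.commute)+

lemma metric_comparison_triangle:
  fixes x1 x2 x3 :: "'a::metric_space"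
  shows "\<exists>P1 P2 P3 :: real^2. dist P1 P2 = dist x1 x2 \<and> dist P2 P3 = dist x2 x3 \<and> dist P3 P1 = dist x3 x1"
  by (intro comparison_triangle_exists zero_le_dist metric_triangle_ineqs)

lemma cmp_bound_metric_nonneg:
  fixes x1 x2 x3 :: "'a::metric_space"
  assumes "k < 3" "k' < 3"
  shows "0 \<le> cmp_bound (dist x1 x2) (dist x2 x3) (dist x3 x1) k s k' t"
proof -
  obtain P1 P2 P3 :: "real^2" where P: "dist P1 P2 = dist x1 x2" "dist P2 P3 = dist x2 x3" "dist P3 P1 = dist x3 x1"
    using metric_comparison_triangle by blast
  show ?thesis
    using dist_cmp_pt[OF assms, of P1 P2 P3 s t] zero_le_dist unfolding P by metis
qed

lemma delta_cat0_triangle_metric_iff: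
  fixes x1 x2 x3 :: "'a::metric_space"
  shows "delta_cat0_triangle M dist \<delta> x1 x2 x3 g1 g2 g3 \<longleftrightarrow> delta_cat0_sides dist \<delta> x1 x2 x3 g1 g2 g3"
proof
  assume "delta_cat0_triangle M dist \<delta> x1 x2 x3 g1 g2 g3"
  then show "delta_cat0_sides dist \<delta> x1 x2 x3 g1 g2 g3"
    by (rule delta_cat0_triangleD[of M dist \<delta> x1 x2 x3 g1 g2 g3, OF _ zero_le_dist zero_le_dist
          metric_triangle_ineqs])
qed (rule delta_cat0_triangleI)

lemma delta_cat0_on_metric_iff:
  "delta_cat0_on M dist \<delta> (V :: 'a::metric_space set) \<longleftrightarrow>
   (\<forall>x1\<in>V. \<forall>x2\<in>V. \<forall>x3\<in>V. \<forall>g1 g2 g3.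
      geodesic_seg M dist g1 x1 x2 \<and> geodesic_seg M dist g2 x2 x3 \<and> geodesic_seg M dist g3 x3 x1 \<longrightarrow>
      delta_cat0_sides dist \<delta> x1 x2 x3 g1 g2 g3)"
  unfolding delta_cat0_on_def delta_cat0_triangle_metric_iff ..

lemma geodesic_seg_dist:
  "geodesic_seg M d g x y \<Longrightarrow> s \<in> {0..d x y} \<Longrightarrow> t \<in> {0..d x y} \<Longrightarrow> d (g s) (g t) = \<bar>s - t\<bar>"
  unfolding geodesic_seg_def by blast

lemma geodesic_seg_start: "geodesic_seg M d g x y \<Longrightarrow> g 0 = x"
  unfolding geodesic_seg_def by blast

lemma geodesic_seg_end: "geodesic_seg M d g x y \<Longrightarrow> g (d x y) = y"
  unfolding geodesic_seg_def by blast

lemma geodesic_seg_dist_start: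
  assumes "geodesic_seg M d g x y" "s \<in> {0..d x y}"
  shows "d (g s) x = s"
  using geodesic_seg_dist[OF assms(1,2), of 0] assms geodesic_seg_start[OF assms(1)] by auto

lemma geodesic_seg_dist_end:
  assumes "geodesic_seg M d g x y" "s \<in> {0..d x y}"
  shows "d (g s) y = d x y - s"
  using geodesic_seg_dist[OF assms(1,2), of "d x y"] assms geodesic_seg_end[OF assms(1)] by auto

section \<open>Ultrafilters and ultralimits\<close>

text \<open>The infimum (the filter generated by the union) of a nonempty chain of proper filters is
  proper: \<open>False\<close> would hold eventually in a single member of the chain.\<close>
lemma Inf_chain_proper:
  fixes C :: "'x filter set"
  assumes "C \<noteq> {}" "bot \<notin> C" and chain: "\<And>G H. G \<in> C \<Longrightarrow> H \<in> C \<Longrightarrow> G \<le> H \<or> H \<le> G"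
  shows "Inf C \<noteq> bot"
proof -
  have base: "eventually P (Inf C) \<longleftrightarrow> (\<exists>G\<in>C. eventually P G)" for P
  proof (rule eventually_Inf_base)
    show "\<exists>K\<in>C. K \<le> inf G H" if "G \<in> C" "H \<in> C" for G H
      using chain[OF that] that by (metis inf_absorb1 inf_absorb2 order_refl)
  qed (use assms(1) in auto)
  show ?thesis
  proof
    assume "Inf C = bot"
    then obtain G where "G \<in> C" "eventually (\<lambda>x. False) G"
      using base[of "\<lambda>x. False"] by auto
    then show False
      using assms(2) by (simp add: eventually_False)
  qed
qed

lemma maximal_filter_ultrafilter:
  assumes "U \<noteq> bot" and max: "\<And>G. G \<noteq> bot \<Longrightarrow> G \<le> U \<Longrightarrow> G = U"
  shows "ultrafilter U"
proof -
  have "eventually P U" if "\<not> eventually (\<lambda>x. \<not> P x) U" for P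
  proof -
    define G where "G = inf U (principal {x. P x})"
    have "G \<noteq> bot"
      using that unfolding G_def trivial_limit_def by (simp add: eventually_inf_principal)
    then have "G = U"
      unfolding G_def by (intro max) auto
    moreover have "eventually P G"
      unfolding G_def by (simp add: eventually_inf_principal)
    ultimately show ?thesis by simp
  qed
  then show ?thesis
    using assms(1) unfolding ultrafilter_def by blast
qed

text \<open>Ultrafilter lemma: every proper filter is refined by an ultrafilter (Zorn's lemma applied
  to the proper filters finer than the given one).\<close>
lemma ultrafilter_refining:
  fixes F :: "'x filter"
  assumes "F \<noteq> bot"
  shows "\<exists>U\<le>F. ultrafilter U"
proof -
  define A where "A = {G. G \<noteq> bot \<and> G \<le> F}"
  define finer where "finer G H \<longleftrightarrow> H \<le> G" for G H :: "'x filter"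
  have po: "partial_order_on A (relation_of finer A)"
    by (rule partial_order_on_relation_ofI) (auto simp: finer_def)
  have "\<exists>u\<in>A. \<forall>G\<in>C. finer G u" if "C \<in> Chains (relation_of finer A)" for C
  proof (cases "C = {}")
    case True
    then show ?thesis using assms unfolding A_def by auto
  next
    case False
    have C: "C \<subseteq> A" "\<And>G H. G \<in> C \<Longrightarrow> H \<in> C \<Longrightarrow> G \<le> H \<or> H \<le> G"
      using that unfolding Chains_def relation_of_def finer_def by auto
    then have "Inf C \<noteq> bot"
      using False unfolding A_def by (intro Inf_chain_proper) auto
    moreover obtain G where "G \<in> C" using False by blast
    then have "Inf C \<le> F"
      using C(1) unfolding A_def by (blast intro: Inf_lower2)
    ultimately show ?thesis
      unfolding A_def finer_def by (auto intro!: bexI[of _ "Inf C"] Inf_lower)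
  qed
  then obtain U where U: "U \<in> A" and max: "\<And>G. G \<in> A \<Longrightarrow> G \<le> U \<Longrightarrow> G = U"
    using predicate_Zorn[OF po] unfolding finer_def by blast
  have "ultrafilter U"
    using U by (intro maximal_filter_ultrafilter max) (auto simp: A_def intro: order_trans)
  then show ?thesis
    using U unfolding A_def by blast
qed

lemma nonprincipal_ultrafilter_exists: "\<exists>U :: nat filter. ultrafilter U \<and> nonprincipal U"
proof -
  obtain U :: "nat filter" where "U \<le> cofinite" "ultrafilter U"
    using ultrafilter_refining[of cofinite] by auto
  moreover have "eventually (\<lambda>j. j \<noteq> i) U" for i :: nat
    using filter_leD[OF \<open>U \<le> cofinite\<close>] by (simp add: eventually_cofinite)
  ultimately show ?thesis
    unfolding nonprincipal_def by blast
qed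

lemma ultrafilter_proper: "ultrafilter U \<Longrightarrow> U \<noteq> bot"
  unfolding ultrafilter_def by auto

lemma ultrafilter_not_eventually: "ultrafilter U \<Longrightarrow> \<not> eventually P U \<Longrightarrow> eventually (\<lambda>x. \<not> P x) U"
  unfolding ultrafilter_def by auto

lemma nonprincipal_le_sequentially:
  assumes "nonprincipal (U :: nat filter)"
  shows "U \<le> sequentially"
proof (rule filter_leI)
  fix P
  assume "eventually P sequentially"
  then obtain N where N: "\<And>n. n \<ge> N \<Longrightarrow> P n"
    by (auto simp: eventually_sequentially)
  have "eventually (\<lambda>n. \<forall>i\<in>{..<N}. n \<noteq> i) U"
    using assms unfolding nonprincipal_def by (intro eventually_ball_finite) auto
  then show "eventually P U"
    by (rule eventually_mono) (metis N lessThan_iff not_le)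
qed

lemma ultrafilter_finite_choice:
  assumes U: "ultrafilter U" and "finite A" "eventually (\<lambda>n. k n \<in> A) U"
  shows "\<exists>c\<in>A. eventually (\<lambda>n. k n = c) U"
  using assms(2,3)
proof (induction A rule: finite_induct)
  case empty
  then show ?case using ultrafilter_proper[OF U] by (simp add: trivial_limit_def)
next
  case (insert c A)
  show ?case
  proof (cases "eventually (\<lambda>n. k n = c) U")
    case False
    have "eventually (\<lambda>n. k n \<in> A) U"
      using eventually_conj[OF insert.prems ultrafilter_not_eventually[OF U False]]
      by (rule eventually_mono) auto
    then show ?thesis using insert.IH by blast
  qed blast
qed

text \<open>Bounded real functions converge along an ultrafilter; the limit is the supremum of the
  numbers eventually below the function.\<close>
lemma ultrafilter_bounded_tendsto:
  fixes x :: "'i \<Rightarrow> real"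
  assumes U: "ultrafilter U" and B: "eventually (\<lambda>n. \<bar>x n\<bar> \<le> B) U"
  shows "(x \<longlongrightarrow> Lim U x) U"
proof -
  define T where "T = {y. eventually (\<lambda>n. y \<le> x n) U}"
  have lower: "- B \<in> T"
    unfolding T_def mem_Collect_eq by (rule eventually_mono[OF B]) auto
  have upper: "y \<le> B" if "y \<in> T" for y
  proof (rule ccontr)
    assume "\<not> y \<le> B"
    have "eventually (\<lambda>n. False) U"
      using eventually_conj[OF B that[unfolded T_def, simplified]]
      by (rule eventually_mono) (use \<open>\<not> y \<le> B\<close> in auto)
    then show False using ultrafilter_proper[OF U] by (simp add: trivial_limit_def)
  qed
  then have bdd: "bdd_above T" unfolding bdd_above_def by blast
  have "(x \<longlongrightarrow> Sup T) U"
  proof (rule order_tendstoI)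
    fix y assume "y < Sup T"
    then obtain z where "z \<in> T" "y < z" using less_cSup_iff[OF _ bdd] lower by auto
    then show "eventually (\<lambda>n. y < x n) U"
      unfolding T_def by (auto elim: eventually_mono)
  next
    fix y assume "Sup T < y"
    then have "\<not> eventually (\<lambda>n. y \<le> x n) U"
      using cSup_upper[OF _ bdd] unfolding T_def by force
    then have "eventually (\<lambda>n. \<not> y \<le> x n) U"
      by (rule ultrafilter_not_eventually[OF U])
    then show "eventually (\<lambda>n. x n < y) U"
      by (rule eventually_mono) auto
  qed
  moreover then have "Lim U x = Sup T"
    using ultrafilter_proper[OF U] by (intro tendsto_Lim)
  ultimately show ?thesis by simp
qed

section \<open>Asymptotic cones\<close>

locale asymptotic_cone =
  fixes U :: "nat filter" and a :: "nat \<Rightarrow> real" and e :: "nat \<Rightarrow> 'a::metric_space"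
  assumes ultra: "ultrafilter U" and nonprincipal: "nonprincipal U" and a_pos: "\<And>n. 0 < a n"
    and a_lim: "filterlim a at_top sequentially"
begin

abbreviation "S \<equiv> cone_seqs U a e"
abbreviation "pd \<equiv> cone_pdist U a"

definition cls :: "(nat \<Rightarrow> 'a) \<Rightarrow> (nat \<Rightarrow> 'a) set" where
  "cls x = {y \<in> S. pd x y = 0}"

lemma U_proper: "U \<noteq> bot"
  using ultra by (rule ultrafilter_proper)

lemma a_tendsto_U: "filterlim a at_top U"
  using filterlim_mono[OF a_lim order_refl nonprincipal_le_sequentially[OF nonprincipal]] .

lemma mem_S_iff: "x \<in> S \<longleftrightarrow> (\<exists>B. eventually (\<lambda>n. dist (x n) (e n) / a n \<le> B) U)"
  unfolding cone_seqs_def by simp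

lemma divide_triangle: "p \<le> q + r \<Longrightarrow> p / a n \<le> q / a n + r / a n"
  using a_pos[of n] by (metis add_divide_distrib divide_right_mono less_imp_le)

lemma S_close:
  assumes "x \<in> S" "eventually (\<lambda>n. dist (y n) (x n) / a n \<le> B) U"
  shows "y \<in> S"
proof -
  obtain B' where "eventually (\<lambda>n. dist (x n) (e n) / a n \<le> B') U"
    using assms(1) unfolding mem_S_iff by auto
  with assms(2) have "eventually (\<lambda>n. dist (y n) (e n) / a n \<le> B + B') U"
  proof eventually_elim
    case (elim n)
    have "dist (y n) (e n) / a n \<le> dist (y n) (x n) / a n + dist (x n) (e n) / a n"
      by (rule divide_triangle[OF dist_triangle])
    with elim show ?case by simp
  qed
  then show ?thesis unfolding mem_S_iff by blast
qed

lemma pd_tendsto: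
  assumes "x \<in> S" "y \<in> S"
  shows "((\<lambda>n. dist (x n) (y n) / a n) \<longlongrightarrow> pd x y) U"
proof -
  obtain B1 B2 where "eventually (\<lambda>n. dist (x n) (e n) / a n \<le> B1) U"
    "eventually (\<lambda>n. dist (y n) (e n) / a n \<le> B2) U"
    using assms unfolding mem_S_iff by auto
  then have "eventually (\<lambda>n. \<bar>dist (x n) (y n) / a n\<bar> \<le> B1 + B2) U"
  proof eventually_elim
    case (elim n)
    have "dist (x n) (y n) / a n \<le> dist (x n) (e n) / a n + dist (y n) (e n) / a n"
      by (rule divide_triangle[OF dist_triangle2])
    with elim a_pos[of n] show ?case by simp
  qed
  then show ?thesis
    unfolding cone_pdist_def by (rule ultrafilter_bounded_tendsto[OF ultra])
qed

lemma pd_eqI: "((\<lambda>n. dist (x n) (y n) / a n) \<longlongrightarrow> L) U \<Longrightarrow> pd x y = L"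
  unfolding cone_pdist_def using U_proper by (rule tendsto_Lim)

lemma pd_nonneg: "x \<in> S \<Longrightarrow> y \<in> S \<Longrightarrow> 0 \<le> pd x y"
  by (rule tendsto_lowerbound[OF pd_tendsto]) (auto intro!: always_eventually simp: a_pos less_imp_le U_proper)

lemma pd_sym: "pd x y = pd y x"
  unfolding cone_pdist_def by (simp add: dist_commute)

lemma pd_refl: "pd x x = 0"
  by (rule pd_eqI) simp

lemma pd_triangle:
  assumes "x \<in> S" "y \<in> S" "z \<in> S"
  shows "pd x z \<le> pd x y + pd y z"
proof (rule tendsto_le[OF U_proper _ pd_tendsto[OF assms(1,3)]])
  show "((\<lambda>n. dist (x n) (y n) / a n + dist (y n) (z n) / a n) \<longlongrightarrow> pd x y + pd y z) U"
    by (intro tendsto_add pd_tendsto assms)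
  show "eventually (\<lambda>n. dist (x n) (z n) / a n \<le> dist (x n) (y n) / a n + dist (y n) (z n) / a n) U"
    by (intro always_eventually allI divide_triangle dist_triangle)
qed

lemma cls_eq_iff:
  assumes "x \<in> S" "y \<in> S"
  shows "cls x = cls y \<longleftrightarrow> pd x y = 0"
proof
  assume "cls x = cls y"
  moreover have "x \<in> cls x"
    using assms(1) unfolding cls_def by (simp add: pd_refl)
  ultimately have "pd y x = 0"
    unfolding cls_def by simp
  then show "pd x y = 0"
    by (simp only: pd_sym[of x y])
next
  assume xy: "pd x y = 0"
  have "pd x z = 0 \<longleftrightarrow> pd y z = 0" if "z \<in> S" for z
    using pd_triangle[OF assms(1,2) that] pd_triangle[OF assms(2,1) that]
      pd_nonneg[OF assms(1) that] pd_nonneg[OF assms(2) that] xy pd_sym[of x y] by linarith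
  then show "cls x = cls y"
    unfolding cls_def by blast
qed

lemma cone_pts_eq: "cone_pts U a e = cls ` S"
  unfolding cone_pts_def cls_def ..

lemma cls_in_cone: "x \<in> S \<Longrightarrow> cls x \<in> cone_pts U a e"
  unfolding cone_pts_eq by auto

lemma cone_pts_cases:
  assumes "P \<in> cone_pts U a e"
  obtains x where "x \<in> S" "P = cls x"
  using assms unfolding cone_pts_eq by auto

lemma cone_dist_cls:
  assumes "x \<in> S" "y \<in> S"
  shows "cone_dist U a (cls x) (cls y) = pd x y"
proof -
  have rep: "(SOME z. z \<in> cls x) \<in> S \<and> pd x (SOME z. z \<in> cls x) = 0" if "x \<in> S" for x
    using someI[of "\<lambda>z. z \<in> cls x" x] that unfolding cls_def by (simp add: pd_refl)
  define x' y' where "x' = (SOME z. z \<in> cls x)" and "y' = (SOME z. z \<in> cls y)"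
  have x': "x' \<in> S" "pd x x' = 0" and y': "y' \<in> S" "pd y y' = 0"
    using rep[OF assms(1)] rep[OF assms(2)] unfolding x'_def y'_def by auto
  have "pd x y \<le> pd x' y'"
    using pd_triangle[OF assms(1) x'(1) assms(2)] pd_triangle[OF x'(1) y'(1) assms(2)]
      x'(2) y'(2) pd_sym[of y' y] by linarith
  moreover have "pd x' y' \<le> pd x y"
    using pd_triangle[OF x'(1) assms(1) y'(1)] pd_triangle[OF assms y'(1)]
      x'(2) y'(2) pd_sym[of x' x] by linarith
  ultimately show ?thesis
    unfolding cone_dist_def x'_def[symmetric] y'_def[symmetric] by simp
qed

lemma cone_triangle_ineqs:
  assumes "x1 \<in> S" "x2 \<in> S" "x3 \<in> S"
  shows "0 \<le> pd x1 x2" "0 \<le> pd x3 x1" "pd x1 x2 \<le> pd x2 x3 + pd x3 x1"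
    "pd x2 x3 \<le> pd x1 x2 + pd x3 x1" "pd x3 x1 \<le> pd x1 x2 + pd x2 x3"
  using pd_nonneg[OF assms(1,2)] pd_nonneg[OF assms(3,1)] pd_triangle[OF assms(1,3,2)]
    pd_triangle[OF assms(2,1,3)] pd_triangle[OF assms(3,2,1)]
    pd_sym[of x1 x3] pd_sym[of x3 x2] pd_sym[of x2 x1]
  by linarith+

lemma ball_seq_in_S:
  assumes "\<And>n. x n \<in> ball (e n) (a n)"
  shows "x \<in> S"
  unfolding mem_S_iff
proof (intro exI always_eventually allI)
  fix n
  show "dist (x n) (e n) / a n \<le> 1"
    using assms[of n] a_pos[of n] by (simp add: dist_commute divide_simps)
qed

definition geo_pt :: "(nat \<Rightarrow> real \<Rightarrow> 'a) \<Rightarrow> (nat \<Rightarrow> 'a) \<Rightarrow> (nat \<Rightarrow> 'a) \<Rightarrow> real \<Rightarrow> nat \<Rightarrow> 'a" where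
  "geo_pt g x y t n = g n (min (t * a n) (dist (x n) (y n)))"

lemma min_rescaled: "0 \<le> t \<Longrightarrow> min (t * a n) L / a n = min t (L / a n)"
  using a_pos[of n] by (simp add: min_def divide_simps)

lemma tendsto_min_rescaled:
  assumes "((\<lambda>n. L n / a n) \<longlongrightarrow> l) U" "0 \<le> t"
  shows "((\<lambda>n. min (t * a n) (L n) / a n) \<longlongrightarrow> min t l) U"
  unfolding min_rescaled[OF assms(2)] by (intro tendsto_min tendsto_const assms(1))

context
  fixes g :: "nat \<Rightarrow> real \<Rightarrow> 'a" and x y :: "nat \<Rightarrow> 'a"
  assumes geo: "\<And>n. geodesic_seg UNIV dist (g n) (x n) (y n)"
begin

lemma geo_pt_0: "geo_pt g x y 0 = x"
  using geodesic_seg_start[OF geo] unfolding geo_pt_def by (auto simp: fun_eq_iff)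

lemma dist_geo_pt:
  "0 \<le> s \<Longrightarrow> 0 \<le> t \<Longrightarrow> dist (geo_pt g x y s n) (geo_pt g x y t n) =
     \<bar>min (s * a n) (dist (x n) (y n)) - min (t * a n) (dist (x n) (y n))\<bar>"
  unfolding geo_pt_def using a_pos[of n] by (intro geodesic_seg_dist[OF geo]) auto

lemma dist_geo_pt_start: "0 \<le> t \<Longrightarrow> dist (geo_pt g x y t n) (x n) = min (t * a n) (dist (x n) (y n))"
  unfolding geo_pt_def using a_pos[of n] by (intro geodesic_seg_dist_start[OF geo]) auto

lemma dist_geo_pt_end:
  "0 \<le> t \<Longrightarrow> dist (geo_pt g x y t n) (y n) = dist (x n) (y n) - min (t * a n) (dist (x n) (y n))"
  unfolding geo_pt_def using a_pos[of n] by (intro geodesic_seg_dist_end[OF geo]) auto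

context
  assumes xy: "x \<in> S" "y \<in> S"
begin

lemma geo_pt_in_S:
  assumes "0 \<le> t"
  shows "geo_pt g x y t \<in> S"
proof (rule S_close[OF xy(1)])
  have "eventually (\<lambda>n. dist (x n) (y n) / a n < pd x y + 1) U"
    using order_tendstoD(2)[OF pd_tendsto[OF xy], of "pd x y + 1"] by simp
  then show "eventually (\<lambda>n. dist (geo_pt g x y t n) (x n) / a n \<le> pd x y + 1) U"
  proof eventually_elim
    case (elim n)
    have "min (t * a n) (dist (x n) (y n)) / a n \<le> dist (x n) (y n) / a n"
      using a_pos[of n] by (intro divide_right_mono) auto
    with elim show ?case
      unfolding dist_geo_pt_start[OF assms] by simp
  qed
qed

lemma pd_geo_pt:
  assumes "0 \<le> s" "0 \<le> t"
  shows "pd (geo_pt g x y s) (geo_pt g x y t) = \<bar>min s (pd x y) - min t (pd x y)\<bar>"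
proof (rule pd_eqI)
  have eq: "(\<lambda>n. dist (geo_pt g x y s n) (geo_pt g x y t n) / a n) =
      (\<lambda>n. \<bar>min (s * a n) (dist (x n) (y n)) / a n - min (t * a n) (dist (x n) (y n)) / a n\<bar>)"
    unfolding dist_geo_pt[OF assms]
    by (rule ext) (use a_pos in \<open>simp add: diff_divide_distrib[symmetric] abs_div abs_of_pos\<close>)
  show "((\<lambda>n. dist (geo_pt g x y s n) (geo_pt g x y t n) / a n) \<longlongrightarrow> \<bar>min s (pd x y) - min t (pd x y)\<bar>) U"
    unfolding eq by (intro tendsto_rabs tendsto_diff tendsto_min_rescaled pd_tendsto xy assms)
qed

lemma pd_geo_pt_end:
  assumes "0 \<le> t"
  shows "pd (geo_pt g x y t) y = pd x y - min t (pd x y)"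
proof (rule pd_eqI)
  have eq: "(\<lambda>n. dist (geo_pt g x y t n) (y n) / a n) =
      (\<lambda>n. dist (x n) (y n) / a n - min (t * a n) (dist (x n) (y n)) / a n)"
    unfolding dist_geo_pt_end[OF assms] by (simp add: diff_divide_distrib)
  show "((\<lambda>n. dist (geo_pt g x y t n) (y n) / a n) \<longlongrightarrow> pd x y - min t (pd x y)) U"
    unfolding eq by (intro tendsto_diff tendsto_min_rescaled pd_tendsto xy assms)
qed

lemma cone_geodesic_seg:
  "geodesic_seg (cone_pts U a e) (cone_dist U a) (\<lambda>t. cls (geo_pt g x y t)) (cls x) (cls y)"
proof -
  have D: "cone_dist U a (cls x) (cls y) = pd x y" by (rule cone_dist_cls[OF xy])
  have D0: "0 \<le> pd x y" by (rule pd_nonneg[OF xy])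
  have inS: "geo_pt g x y t \<in> S" if "t \<in> {0..pd x y}" for t
    using geo_pt_in_S that by auto
  show ?thesis
    unfolding geodesic_seg_def D
  proof (intro conjI ballI subsetI)
    show "cls (geo_pt g x y 0) = cls x" unfolding geo_pt_0 ..
    show "cls (geo_pt g x y (pd x y)) = cls y"
      using cls_eq_iff[OF geo_pt_in_S[OF D0] xy(2)] pd_geo_pt_end[OF D0] by simp
    show "z \<in> cone_pts U a e" if "z \<in> (\<lambda>t. cls (geo_pt g x y t)) ` {0..pd x y}" for z
      using that inS cls_in_cone by auto
    show "cone_dist U a (cls (geo_pt g x y s)) (cls (geo_pt g x y t)) = \<bar>s - t\<bar>"
      if "s \<in> {0..pd x y}" "t \<in> {0..pd x y}" for s t
      unfolding cone_dist_cls[OF inS[OF that(1)] inS[OF that(2)]] using pd_geo_pt[of s t] that by simp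
  qed
qed

end

end

end

definition some_geodesic :: "'a::metric_space \<Rightarrow> 'a \<Rightarrow> real \<Rightarrow> 'a" where
  "some_geodesic x y = (SOME \<gamma>. geodesic_seg UNIV dist \<gamma> x y)"

lemma some_geodesic:
  assumes "geodesic_space (UNIV :: 'a::metric_space set) dist"
  shows "geodesic_seg UNIV dist (some_geodesic x y) x (y :: 'a)"
proof -
  have "\<exists>\<gamma>. geodesic_seg UNIV dist \<gamma> x y"
    using assms unfolding geodesic_space_def by blast
  then show ?thesis
    unfolding some_geodesic_def by (rule someI_ex)
qed

lemma (in asymptotic_cone) cone_geodesic_space:
  assumes "geodesic_space (UNIV :: 'a set) dist"
  shows "geodesic_space (cone_pts U a e) (cone_dist U a)"
  unfolding geodesic_space_def
proof (intro ballI)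
  fix P Q assume "P \<in> cone_pts U a e" "Q \<in> cone_pts U a e"
  then obtain x y where "x \<in> S" "P = cls x" "y \<in> S" "Q = cls y"
    by (elim cone_pts_cases)
  then show "\<exists>\<gamma>. geodesic_seg (cone_pts U a e) (cone_dist U a) \<gamma> P Q"
    using cone_geodesic_seg[OF some_geodesic[OF assms]] by blast
qed

context asymptotic_cone
begin

text \<open>Fraction of a side reached at rescaled arclength \<open>s\<close>; the case of a degenerate limit side
  is harmless since then \<open>s = 0\<close>.\<close>
lemma tendsto_side_fraction:
  assumes L: "((\<lambda>n. L n / a n) \<longlongrightarrow> l) U" and s: "0 \<le> s" "s \<le> l" and L0: "\<And>n. 0 \<le> L n"
  shows "((\<lambda>n. min (s * a n) (L n) / L n) \<longlongrightarrow> s / l) U"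
proof (cases "l = 0")
  case True
  then show ?thesis using s L0 by (simp add: min_def)
next
  case False
  then have "l > 0" using s by simp
  have "((\<lambda>n. (min (s * a n) (L n) / a n) / (L n / a n)) \<longlongrightarrow> min s l / l) U"
    by (intro tendsto_divide tendsto_min_rescaled L s) (use \<open>l > 0\<close> in simp)
  then have "((\<lambda>n. (min (s * a n) (L n) / a n) / (L n / a n)) \<longlongrightarrow> s / l) U"
    using s by simp
  moreover have "eventually (\<lambda>n. 0 < L n / a n) U"
    using order_tendstoD(1)[OF L \<open>l > 0\<close>] .
  then have "eventually (\<lambda>n. min (s * a n) (L n) / a n / (L n / a n) = min (s * a n) (L n) / L n) U"
    by eventually_elim (use a_pos in \<open>auto simp: divide_simps\<close>)
  ultimately show ?thesis
    by (rule Lim_transform_eventually)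
qed

lemma tendsto_cmp_bound_rescaled:
  assumes L1: "((\<lambda>n. L1 n / a n) \<longlongrightarrow> l1) U" and L2: "((\<lambda>n. L2 n / a n) \<longlongrightarrow> l2) U"
    and L3: "((\<lambda>n. L3 n / a n) \<longlongrightarrow> l3) U"
    and nonneg: "\<And>n. 0 \<le> L1 n" "\<And>n. 0 \<le> L2 n" "\<And>n. 0 \<le> L3 n"
    and st: "s \<in> {0..sel3 k l1 l2 l3}" "t \<in> {0..sel3 k' l1 l2 l3}"
  shows "((\<lambda>n. cmp_bound (L1 n) (L2 n) (L3 n) k (min (s * a n) (sel3 k (L1 n) (L2 n) (L3 n)))
      k' (min (t * a n) (sel3 k' (L1 n) (L2 n) (L3 n))) / a n) \<longlongrightarrow> cmp_bound l1 l2 l3 k s k' t) U"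
proof -
  have scale: "cmp_bound (L1 n) (L2 n) (L3 n) k \<sigma> k' \<tau> / a n =
      sqrt (cmp_sqdist (L1 n / a n) (L2 n / a n) (L3 n / a n)
        k (\<sigma> / sel3 k (L1 n) (L2 n) (L3 n)) k' (\<tau> / sel3 k' (L1 n) (L2 n) (L3 n)))" for n \<sigma> \<tau>
    using cmp_bound_scale[OF a_pos, of "L1 n" n "L2 n" "L3 n" k \<sigma> k' \<tau>, symmetric] a_pos[of n]
    unfolding cmp_bound_def sel3_divide[symmetric] by simp
  have fraction: "((\<lambda>n. min (s * a n) (sel3 k (L1 n) (L2 n) (L3 n)) / sel3 k (L1 n) (L2 n) (L3 n))
      \<longlongrightarrow> s / sel3 k l1 l2 l3) U" if "s \<in> {0..sel3 k l1 l2 l3}" for s k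
    by (rule tendsto_side_fraction)
      (use that nonneg in \<open>auto simp: sel3_divide intro!: tendsto_sel3 L1 L2 L3 sel3_nonneg\<close>)
  show ?thesis
    unfolding scale by (unfold cmp_bound_def) (intro tendsto_real_sqrt tendsto_cmp_sqdist L1 L2 L3 fraction st)
qed

text \<open>How far \<open>m n\<close> is from lying between \<open>y n\<close> and \<open>z n\<close> at distance \<open>t a n\<close> from \<open>y n\<close>.\<close>
definition between_defect :: "(nat \<Rightarrow> 'a) \<Rightarrow> (nat \<Rightarrow> 'a) \<Rightarrow> (nat \<Rightarrow> 'a) \<Rightarrow> real \<Rightarrow> nat \<Rightarrow> real" where
  "between_defect y z m t n =
    (let \<tau> = min (t * a n) (dist (y n) (z n))
     in max 0 (max (dist (y n) (m n) - \<tau>) (dist (m n) (z n) - (dist (y n) (z n) - \<tau>))))"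

lemma between_defect_tendsto:
  assumes y: "y \<in> S" and z: "z \<in> S" and m: "m \<in> S" and between: "pd y m + pd m z = pd y z"
  shows "((\<lambda>n. between_defect y z m (pd y m) n / a n) \<longlongrightarrow> 0) U"
proof -
  define t D where "t = pd y m" and "D = pd y z"
  have tD: "0 \<le> t" "t \<le> D"
    using between pd_nonneg[OF y m] pd_nonneg[OF m z] unfolding t_def D_def by auto
  define \<tau> where "\<tau> n = min (t * a n) (dist (y n) (z n))" for n
  have "between_defect y z m t n / a n = max 0 (max (dist (y n) (m n) / a n - \<tau> n / a n)
      (dist (m n) (z n) / a n - (dist (y n) (z n) / a n - \<tau> n / a n)))" for n
    unfolding between_defect_def \<tau>_def Let_def using a_pos[of n]
    by (simp add: max_divide_distrib_right diff_divide_distrib)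
  moreover have "((\<lambda>n. max 0 (max (dist (y n) (m n) / a n - \<tau> n / a n)
      (dist (m n) (z n) / a n - (dist (y n) (z n) / a n - \<tau> n / a n)))) \<longlongrightarrow>
      max 0 (max (t - min t D) ((D - t) - (D - min t D)))) U"
  proof -
    have "D - t = pd m z"
      using between unfolding t_def D_def by simp
    then have "((\<lambda>n. dist (m n) (z n) / a n) \<longlongrightarrow> D - t) U"
      using pd_tendsto[OF m z] by simp
    then show ?thesis
      unfolding \<tau>_def using tD pd_tendsto[OF y m, folded t_def] pd_tendsto[OF y z, folded D_def]
      by (intro tendsto_max tendsto_const tendsto_diff tendsto_min_rescaled) auto
  qed
  moreover have "max 0 (max (t - min t D) ((D - t) - (D - min t D))) = 0"
    using tD by simp
  ultimately show ?thesis
    unfolding t_def by simp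
qed

end

section \<open>Sublinearly CAT(0) spaces have CAT(0) asymptotic cones\<close>

lemma cmp_bound_near_side:
  fixes L b c \<tau> \<epsilon> :: real
  assumes "0 \<le> \<tau>" "\<tau> \<le> L" "0 \<le> \<epsilon>" "0 \<le> b" "0 \<le> c" "c \<le> \<tau> + \<epsilon>" "b \<le> L - \<tau> + \<epsilon>"
  shows "cmp_bound L b c 0 \<tau> 2 0 \<le> sqrt (L * \<epsilon> + \<epsilon>\<^sup>2)"
proof -
  define u where "u = \<tau> / L"
  have tu: "\<tau> = u * L" and u: "0 \<le> u" "u \<le> 1"
    using assms unfolding u_def by (cases "L = 0"; auto simp: divide_simps)+
  have "b\<^sup>2 \<le> ((1 - u) * L + \<epsilon>)\<^sup>2" "c\<^sup>2 \<le> (u * L + \<epsilon>)\<^sup>2"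
    using assms tu by (intro power_mono; simp add: algebra_simps)+
  then have "u * b\<^sup>2 \<le> u * ((1 - u) * L + \<epsilon>)\<^sup>2" "(1 - u) * c\<^sup>2 \<le> (1 - u) * (u * L + \<epsilon>)\<^sup>2"
    using u by (simp_all add: mult_left_mono)
  moreover have "cmp_sqdist L b c 0 u 2 0 = - u * (1 - u) * L\<^sup>2 + u * b\<^sup>2 + (1 - u) * c\<^sup>2"
    unfolding cmp_sqdist_def side_weight_def Let_def by (simp add: algebra_simps power2_eq_square)
  ultimately have "cmp_sqdist L b c 0 u 2 0 \<le> - u * (1 - u) * L\<^sup>2 + u * ((1 - u) * L + \<epsilon>)\<^sup>2 + (1 - u) * (u * L + \<epsilon>)\<^sup>2"
    by linarith
  also have "\<dots> = 4 * (u * (1 - u)) * (L * \<epsilon>) + \<epsilon>\<^sup>2"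
    by (simp add: algebra_simps power2_eq_square)
  also have "\<dots> \<le> L * \<epsilon> + \<epsilon>\<^sup>2"
  proof -
    have "4 * (u * (1 - u)) \<le> 1"
      using zero_le_power2[of "2 * u - 1"] by (simp add: algebra_simps power2_eq_square)
    then show ?thesis
      using mult_right_mono[of "4 * (u * (1 - u))" 1 "L * \<epsilon>"] assms by simp
  qed
  finally show ?thesis
    unfolding cmp_bound_def u_def by (simp add: real_sqrt_le_mono)
qed

lemma delta_cat0_near_geodesic:
  fixes y z m :: "'a::metric_space"
  assumes geo: "geodesic_space (UNIV :: 'a set) dist" and g: "geodesic_seg UNIV dist g y z"
    and cat: "\<And>h2 h3. geodesic_seg UNIV dist h2 z m \<Longrightarrow> geodesic_seg UNIV dist h3 m y \<Longrightarrow>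
      delta_cat0_sides dist \<delta> y z m g h2 h3"
    and \<tau>: "0 \<le> \<tau>" "\<tau> \<le> dist y z" and \<epsilon>: "0 \<le> \<epsilon>"
    and near: "dist y m \<le> \<tau> + \<epsilon>" "dist m z \<le> dist y z - \<tau> + \<epsilon>"
  shows "dist m (g \<tau>) \<le> sqrt (dist y z * \<epsilon> + \<epsilon>\<^sup>2) + \<delta>"
proof -
  define h2 h3 where "h2 = some_geodesic z m" and "h3 = some_geodesic m y"
  have h3: "geodesic_seg UNIV dist h3 m y"
    unfolding h3_def by (rule some_geodesic[OF geo])
  have "delta_cat0_sides dist \<delta> y z m g h2 h3"
    unfolding h2_def h3_def by (intro cat some_geodesic[OF geo])
  then have "dist (g \<tau>) (h3 0) \<le> cmp_bound (dist y z) (dist z m) (dist m y) 0 \<tau> 2 0 + \<delta>"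
    using delta_cat0_sidesD[of dist \<delta> y z m g h2 h3 0 2 \<tau> 0] \<tau> by simp
  also have "\<dots> \<le> sqrt (dist y z * \<epsilon> + \<epsilon>\<^sup>2) + \<delta>"
    using cmp_bound_near_side[OF \<tau> \<epsilon>, of "dist z m" "dist m y"] near by (simp add: dist_commute)
  finally show ?thesis
    using geodesic_seg_start[OF h3] by (simp add: dist_commute)
qed

locale sublinear_cat0 = asymptotic_cone U a e for U a and e :: "nat \<Rightarrow> 'a::metric_space" +
  fixes f :: "real \<Rightarrow> real"
  assumes geo: "geodesic_space (UNIV :: 'a set) dist"
    and f_sublinear: "((\<lambda>r. f r / r) \<longlongrightarrow> 0) at_top"
    and f_cat0: "\<And>r (c::'a). r > 0 \<Longrightarrow> delta_cat0_on UNIV dist (f r) (ball c r)"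
begin

lemma S_in_ball:
  assumes "x \<in> S"
  obtains R where "\<And>R'. R \<le> R' \<Longrightarrow> eventually (\<lambda>n. x n \<in> ball (e n) (R' * a n)) U"
proof -
  obtain B where B: "eventually (\<lambda>n. dist (x n) (e n) / a n \<le> B) U"
    using assms unfolding mem_S_iff by blast
  have "eventually (\<lambda>n. x n \<in> ball (e n) (R' * a n)) U" if "B + 1 \<le> R'" for R'
    using B
  proof eventually_elim
    case (elim n)
    have "dist (x n) (e n) \<le> B * a n"
      using elim a_pos[of n] by (simp add: divide_simps)
    also have "\<dots> < R' * a n"
      using that a_pos[of n] by (intro mult_strict_right_mono) auto
    finally show ?case by (simp add: dist_commute)
  qed
  then show ?thesis using that by blast
qed

lemma eventually_delta_cat0:
  assumes "x1 \<in> S" "x2 \<in> S" "x3 \<in> S"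
  obtains \<delta> where "((\<lambda>n. \<delta> n / a n) \<longlongrightarrow> 0) U"
    "eventually (\<lambda>n. \<forall>g1 g2 g3. geodesic_seg UNIV dist g1 (x1 n) (x2 n) \<and>
        geodesic_seg UNIV dist g2 (x2 n) (x3 n) \<and> geodesic_seg UNIV dist g3 (x3 n) (x1 n) \<longrightarrow>
        delta_cat0_sides dist (\<delta> n) (x1 n) (x2 n) (x3 n) g1 g2 g3) U"
proof -
  obtain R1 where R1: "\<And>R'. R1 \<le> R' \<Longrightarrow> eventually (\<lambda>n. x1 n \<in> ball (e n) (R' * a n)) U"
    using S_in_ball[OF assms(1)] by blast
  obtain R2 where R2: "\<And>R'. R2 \<le> R' \<Longrightarrow> eventually (\<lambda>n. x2 n \<in> ball (e n) (R' * a n)) U"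
    using S_in_ball[OF assms(2)] by blast
  obtain R3 where R3: "\<And>R'. R3 \<le> R' \<Longrightarrow> eventually (\<lambda>n. x3 n \<in> ball (e n) (R' * a n)) U"
    using S_in_ball[OF assms(3)] by blast
  define R where "R = max 1 (max R1 (max R2 R3))"
  have "R > 0" "R1 \<le> R" "R2 \<le> R" "R3 \<le> R" unfolding R_def by auto
  have "((\<lambda>n. R * (f (R * a n) / (R * a n))) \<longlongrightarrow> R * 0) U"
    using filterlim_compose[OF f_sublinear filterlim_tendsto_pos_mult_at_top[OF tendsto_const \<open>R > 0\<close> a_tendsto_U]]
    by (intro tendsto_mult tendsto_const)
  then have "((\<lambda>n. f (R * a n) / a n) \<longlongrightarrow> 0) U"
    using \<open>R > 0\<close> a_pos by simp
  moreover have "eventually (\<lambda>n. \<forall>g1 g2 g3. geodesic_seg UNIV dist g1 (x1 n) (x2 n) \<and>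
        geodesic_seg UNIV dist g2 (x2 n) (x3 n) \<and> geodesic_seg UNIV dist g3 (x3 n) (x1 n) \<longrightarrow>
        delta_cat0_sides dist (f (R * a n)) (x1 n) (x2 n) (x3 n) g1 g2 g3) U"
    using R1[OF \<open>R1 \<le> R\<close>] R2[OF \<open>R2 \<le> R\<close>] R3[OF \<open>R3 \<le> R\<close>]
  proof eventually_elim
    case (elim n)
    then show ?case
      using f_cat0[of "R * a n" "e n"] \<open>R > 0\<close> a_pos[of n]
      unfolding delta_cat0_on_metric_iff by simp
  qed
  ultimately show ?thesis by (rule that)
qed

end

context sublinear_cat0
begin

text \<open>This is where \<open>\<delta> n = o(a n)\<close> enters: the comparison
  triangle forces \<open>m n\<close> to within \<open>o(a n)\<close> of the geodesic.\<close>
lemma pd_between_geo_pt: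
  assumes y: "y \<in> S" and z: "z \<in> S" and m: "m \<in> S" and between: "pd y m + pd m z = pd y z"
    and h: "\<And>n. geodesic_seg UNIV dist (h n) (y n) (z n)"
  shows "pd m (geo_pt h y z (pd y m)) = 0"
proof -
  define t D where "t = pd y m" and "D = pd y z"
  have tD: "0 \<le> t" "t \<le> D"
    using between pd_nonneg[OF y m] pd_nonneg[OF m z] unfolding t_def D_def by auto
  define L where "L n = dist (y n) (z n)" for n
  define \<tau> where "\<tau> n = min (t * a n) (L n)" for n
  define \<epsilon> where "\<epsilon> = between_defect y z m t"
  have \<tau>: "0 \<le> \<tau> n" "\<tau> n \<le> L n" for n
    unfolding \<tau>_def L_def using tD a_pos[of n] by auto
  have \<epsilon>: "0 \<le> \<epsilon> n" for n
    unfolding \<epsilon>_def between_defect_def Let_def by simp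
  have L_lim: "((\<lambda>n. L n / a n) \<longlongrightarrow> D) U"
    unfolding L_def D_def by (rule pd_tendsto[OF y z])
  have \<epsilon>_lim: "((\<lambda>n. \<epsilon> n / a n) \<longlongrightarrow> 0) U"
    unfolding \<epsilon>_def t_def by (rule between_defect_tendsto[OF y z m between])
  obtain \<delta> where \<delta>_lim: "((\<lambda>n. \<delta> n / a n) \<longlongrightarrow> 0) U"
    and cat: "eventually (\<lambda>n. \<forall>g1 g2 g3. geodesic_seg UNIV dist g1 (y n) (z n) \<and>
        geodesic_seg UNIV dist g2 (z n) (m n) \<and> geodesic_seg UNIV dist g3 (m n) (y n) \<longrightarrow>
        delta_cat0_sides dist (\<delta> n) (y n) (z n) (m n) g1 g2 g3) U"
    using eventually_delta_cat0[OF y z m] by blast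
  have upper: "eventually (\<lambda>n. dist (m n) (geo_pt h y z t n) / a n \<le>
      sqrt (L n / a n * (\<epsilon> n / a n) + (\<epsilon> n / a n)\<^sup>2) + \<delta> n / a n) U"
    using cat
  proof eventually_elim
    case (elim n)
    have "dist (m n) (h n (\<tau> n)) \<le> sqrt (L n * \<epsilon> n + (\<epsilon> n)\<^sup>2) + \<delta> n"
      unfolding L_def
      by (rule delta_cat0_near_geodesic[OF geo h])
        (use elim h \<tau>[of n] \<epsilon>[of n] in \<open>auto simp: L_def \<tau>_def \<epsilon>_def between_defect_def Let_def\<close>)
    then have bound: "dist (m n) (geo_pt h y z t n) / a n \<le> sqrt (L n * \<epsilon> n + (\<epsilon> n)\<^sup>2) / a n + \<delta> n / a n"
      unfolding geo_pt_def \<tau>_def[symmetric] L_def[symmetric] using a_pos[of n]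
      by (simp add: divide_right_mono add_divide_distrib[symmetric])
    have "L n / a n * (\<epsilon> n / a n) + (\<epsilon> n / a n)\<^sup>2 = (L n * \<epsilon> n + (\<epsilon> n)\<^sup>2) / (a n)\<^sup>2"
      using a_pos[of n] by (simp add: power2_eq_square field_simps)
    then have "sqrt (L n * \<epsilon> n + (\<epsilon> n)\<^sup>2) / a n = sqrt (L n / a n * (\<epsilon> n / a n) + (\<epsilon> n / a n)\<^sup>2)"
      using a_pos[of n] by (simp add: real_sqrt_divide)
    with bound show ?case by linarith
  qed
  have "((\<lambda>n. sqrt (L n / a n * (\<epsilon> n / a n) + (\<epsilon> n / a n)\<^sup>2) + \<delta> n / a n) \<longlongrightarrow>
      sqrt (D * 0 + 0\<^sup>2) + 0) U"
    by (intro tendsto_add tendsto_real_sqrt tendsto_mult tendsto_power L_lim \<epsilon>_lim \<delta>_lim)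
  then have upper_lim: "((\<lambda>n. sqrt (L n / a n * (\<epsilon> n / a n) + (\<epsilon> n / a n)\<^sup>2) + \<delta> n / a n) \<longlongrightarrow> 0) U"
    by simp
  have lower: "eventually (\<lambda>n. 0 \<le> dist (m n) (geo_pt h y z t n) / a n) U"
    using a_pos by (simp add: less_imp_le)
  have "((\<lambda>n. dist (m n) (geo_pt h y z t n) / a n) \<longlongrightarrow> 0) U"
    by (rule tendsto_sandwich[OF lower upper tendsto_const upper_lim])
  then show ?thesis
    unfolding t_def[symmetric] by (rule pd_eqI)
qed

text \<open>Geodesics of the cone are unique: each one is the ultralimit of (any) geodesics between
  representatives of its endpoints.\<close>
lemma cone_geodesic_eq:
  assumes y: "y \<in> S" and z: "z \<in> S"
    and c: "geodesic_seg (cone_pts U a e) (cone_dist U a) c (cls y) (cls z)"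
    and t: "t \<in> {0..pd y z}" and h: "\<And>n. geodesic_seg UNIV dist (h n) (y n) (z n)"
  shows "c t = cls (geo_pt h y z t)"
proof -
  have D: "cone_dist U a (cls y) (cls z) = pd y z"
    by (rule cone_dist_cls[OF y z])
  have "c t \<in> cone_pts U a e"
    using c t unfolding geodesic_seg_def D by auto
  then obtain m where m: "m \<in> S" "c t = cls m"
    by (rule cone_pts_cases)
  have "cone_dist U a (c t) (cls y) = t" "cone_dist U a (c t) (cls z) = pd y z - t"
    using geodesic_seg_dist_start[OF c] geodesic_seg_dist_end[OF c] t unfolding D by auto
  then have "pd y m = t" "pd m z = pd y z - t"
    unfolding m(2) cone_dist_cls[OF m(1) y] cone_dist_cls[OF m(1) z] by (simp_all add: pd_sym)
  then have "pd m (geo_pt h y z t) = 0"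
    using pd_between_geo_pt[OF y z m(1) _ h] by simp
  then show ?thesis
    using m cls_eq_iff[OF m(1) geo_pt_in_S[OF h y z]] t by simp
qed

text \<open>Ultralimits of geodesic triangles satisfy the CAT(0) inequality, since the \<open>\<delta> n\<close>-CAT(0)
  inequality rescales to one with defect \<open>\<delta> n / a n \<rightarrow> 0\<close>.\<close>
lemma pd_geo_pt_cat0:
  assumes x: "x1 \<in> S" "x2 \<in> S" "x3 \<in> S"
    and G: "\<And>n. geodesic_seg UNIV dist (G1 n) (x1 n) (x2 n)" "\<And>n. geodesic_seg UNIV dist (G2 n) (x2 n) (x3 n)"
      "\<And>n. geodesic_seg UNIV dist (G3 n) (x3 n) (x1 n)"
    and k: "k < 3" "k' < 3"
    and s: "s \<in> {0..sel3 k (pd x1 x2) (pd x2 x3) (pd x3 x1)}"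
    and t: "t \<in> {0..sel3 k' (pd x1 x2) (pd x2 x3) (pd x3 x1)}"
  shows "pd (geo_pt (sel3 k G1 G2 G3) (sel3 k x1 x2 x3) (sel3 k x2 x3 x1) s)
      (geo_pt (sel3 k' G1 G2 G3) (sel3 k' x1 x2 x3) (sel3 k' x2 x3 x1) t)
    \<le> cmp_bound (pd x1 x2) (pd x2 x3) (pd x3 x1) k s k' t"
proof -
  define L1 L2 L3 where "L1 n = dist (x1 n) (x2 n)" and "L2 n = dist (x2 n) (x3 n)"
    and "L3 n = dist (x3 n) (x1 n)" for n
  define p q where "p = geo_pt (sel3 k G1 G2 G3) (sel3 k x1 x2 x3) (sel3 k x2 x3 x1) s"
    and "q = geo_pt (sel3 k' G1 G2 G3) (sel3 k' x1 x2 x3) (sel3 k' x2 x3 x1) t"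
  define \<sigma> \<tau> where "\<sigma> n = min (s * a n) (sel3 k (L1 n) (L2 n) (L3 n))"
    and "\<tau> n = min (t * a n) (sel3 k' (L1 n) (L2 n) (L3 n))" for n
  have pq: "p n = sel3 k (G1 n) (G2 n) (G3 n) (\<sigma> n)" "q n = sel3 k' (G1 n) (G2 n) (G3 n) (\<tau> n)" for n
    unfolding p_def q_def geo_pt_def \<sigma>_def \<tau>_def L1_def L2_def L3_def sel3_apply
    by (simp_all add: sel3_comp[of _ dist])
  have pS: "p \<in> S" and qS: "q \<in> S"
    unfolding p_def q_def using s t x
    by (auto intro!: geo_pt_in_S geodesic_seg_sel3_seq[OF _ G] k sel3_in)
  obtain \<delta> where \<delta>_lim: "((\<lambda>n. \<delta> n / a n) \<longlongrightarrow> 0) U"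
    and cat: "eventually (\<lambda>n. \<forall>g1 g2 g3. geodesic_seg UNIV dist g1 (x1 n) (x2 n) \<and>
        geodesic_seg UNIV dist g2 (x2 n) (x3 n) \<and> geodesic_seg UNIV dist g3 (x3 n) (x1 n) \<longrightarrow>
        delta_cat0_sides dist (\<delta> n) (x1 n) (x2 n) (x3 n) g1 g2 g3) U"
    using eventually_delta_cat0[OF x] by blast
  have "eventually (\<lambda>n. dist (p n) (q n) / a n \<le>
      cmp_bound (L1 n) (L2 n) (L3 n) k (\<sigma> n) k' (\<tau> n) / a n + \<delta> n / a n) U"
    using cat
  proof eventually_elim
    case (elim n)
    have "0 \<le> sel3 j (L1 n) (L2 n) (L3 n)" for j
      unfolding L1_def L2_def L3_def by (intro sel3_nonneg) auto
    then have "dist (p n) (q n) \<le> cmp_bound (L1 n) (L2 n) (L3 n) k (\<sigma> n) k' (\<tau> n) + \<delta> n"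
      unfolding pq L1_def L2_def L3_def using s t a_pos[of n] elim G
      by (intro delta_cat0_sidesD k) (auto simp: \<sigma>_def \<tau>_def L1_def L2_def L3_def)
    then show ?case
      using a_pos[of n] by (simp add: add_divide_distrib[symmetric] divide_right_mono)
  qed
  moreover have "((\<lambda>n. cmp_bound (L1 n) (L2 n) (L3 n) k (\<sigma> n) k' (\<tau> n) / a n + \<delta> n / a n) \<longlongrightarrow>
      cmp_bound (pd x1 x2) (pd x2 x3) (pd x3 x1) k s k' t + 0) U"
    unfolding \<sigma>_def \<tau>_def L1_def L2_def L3_def
    by (intro tendsto_add tendsto_cmp_bound_rescaled pd_tendsto x s t \<delta>_lim zero_le_dist)
  ultimately have "pd p q \<le> cmp_bound (pd x1 x2) (pd x2 x3) (pd x3 x1) k s k' t + 0"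
    by (intro tendsto_le[OF U_proper _ pd_tendsto[OF pS qS]])
  then show ?thesis
    unfolding p_def q_def by simp
qed

text \<open>Triangles of the cone satisfy the CAT(0) inequality: each side is the ultralimit of chosen
  geodesics (uniqueness of cone geodesics), to which \<open>pd_geo_pt_cat0\<close> applies.\<close>
lemma cone_triangle_cat0:
  assumes x: "x1 \<in> S" "x2 \<in> S" "x3 \<in> S"
    and g: "geodesic_seg (cone_pts U a e) (cone_dist U a) g1 (cls x1) (cls x2)"
      "geodesic_seg (cone_pts U a e) (cone_dist U a) g2 (cls x2) (cls x3)"
      "geodesic_seg (cone_pts U a e) (cone_dist U a) g3 (cls x3) (cls x1)"
  shows "delta_cat0_sides (cone_dist U a) 0 (cls x1) (cls x2) (cls x3) g1 g2 g3"
proof -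
  define G where "G x y n = some_geodesic (x n) (y n)" for x y :: "nat \<Rightarrow> 'a" and n
  have G: "geodesic_seg UNIV dist (G x y n) (x n) (y n)" for x y n
    unfolding G_def by (rule some_geodesic[OF geo])
  define P where "P k s = geo_pt (sel3 k (G x1 x2) (G x2 x3) (G x3 x1)) (sel3 k x1 x2 x3) (sel3 k x2 x3 x1) s"
    for k s
  have side_geo: "\<And>n. geodesic_seg UNIV dist (sel3 k (G x1 x2) (G x2 x3) (G x3 x1) n) (sel3 k x1 x2 x3 n) (sel3 k x2 x3 x1 n)"
    if "k < 3" for k
    by (rule geodesic_seg_sel3_seq[OF that G[of x1 x2] G[of x2 x3] G[of x3 x1]])
  have P_S: "P k s \<in> S" if "0 \<le> s" "k < 3" for k s
    unfolding P_def using x that by (intro geo_pt_in_S side_geo sel3_in) auto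
  have side: "sel3 k g1 g2 g3 s = cls (P k s)"
    if k: "k < 3" and s: "s \<in> {0..sel3 k (pd x1 x2) (pd x2 x3) (pd x3 x1)}" for k s
    unfolding P_def
  proof (rule cone_geodesic_eq)
    show "sel3 k x1 x2 x3 \<in> S" "sel3 k x2 x3 x1 \<in> S"
      using x by (auto intro: sel3_in)
    show "geodesic_seg (cone_pts U a e) (cone_dist U a) (sel3 k g1 g2 g3) (cls (sel3 k x1 x2 x3)) (cls (sel3 k x2 x3 x1))"
      using geodesic_seg_sel3[OF k g] by (simp add: sel3_map[of k cls])
    show "s \<in> {0..pd (sel3 k x1 x2 x3) (sel3 k x2 x3 x1)}"
      using s by (simp add: sel3_comp[of _ pd])
    show "geodesic_seg UNIV dist (sel3 k (G x1 x2) (G x2 x3) (G x3 x1) n) (sel3 k x1 x2 x3 n) (sel3 k x2 x3 x1 n)" for n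
      by (rule side_geo[OF k])
  qed
  show ?thesis
    unfolding delta_cat0_sides_def cone_dist_cls[OF x(1,2)] cone_dist_cls[OF x(2,3)] cone_dist_cls[OF x(3,1)]
  proof (intro allI impI ballI)
    fix k k' s t
    assume k: "k < 3" "k' < 3" and s: "s \<in> {0..sel3 k (pd x1 x2) (pd x2 x3) (pd x3 x1)}"
      and t: "t \<in> {0..sel3 k' (pd x1 x2) (pd x2 x3) (pd x3 x1)}"
    have "P k s \<in> S" "P k' t \<in> S"
      using s t k by (auto intro: P_S)
    then have "cone_dist U a (cls (P k s)) (cls (P k' t)) = pd (P k s) (P k' t)"
      by (rule cone_dist_cls)
    also have "\<dots> \<le> cmp_bound (pd x1 x2) (pd x2 x3) (pd x3 x1) k s k' t"
      unfolding P_def by (rule pd_geo_pt_cat0[OF x G[of x1 x2] G[of x2 x3] G[of x3 x1] k s t])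
    finally show "cone_dist U a (sel3 k g1 g2 g3 s) (sel3 k' g1 g2 g3 t) \<le> cmp_bound (pd x1 x2) (pd x2 x3) (pd x3 x1) k s k' t + 0"
      unfolding side[OF k(1) s] side[OF k(2) t] by (simp only: add_0_right)
  qed
qed

lemma cone_delta_cat0: "delta_cat0_on (cone_pts U a e) (cone_dist U a) 0 (cone_pts U a e)"
  unfolding delta_cat0_on_def
proof (intro ballI allI impI)
  fix X1 X2 X3 g1 g2 g3
  assume "X1 \<in> cone_pts U a e" "X2 \<in> cone_pts U a e" "X3 \<in> cone_pts U a e"
    and "geodesic_seg (cone_pts U a e) (cone_dist U a) g1 X1 X2 \<and>
      geodesic_seg (cone_pts U a e) (cone_dist U a) g2 X2 X3 \<and> geodesic_seg (cone_pts U a e) (cone_dist U a) g3 X3 X1"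
  moreover obtain x1 x2 x3 where "x1 \<in> S" "X1 = cls x1" "x2 \<in> S" "X2 = cls x2" "x3 \<in> S" "X3 = cls x3"
    using calculation(1-3) by (elim cone_pts_cases)
  ultimately show "delta_cat0_triangle (cone_pts U a e) (cone_dist U a) 0 X1 X2 X3 g1 g2 g3"
    by (simp add: delta_cat0_triangleI cone_triangle_cat0)
qed

theorem cone_CAT0: "CAT0_space (cone_pts U a e) (cone_dist U a)"
  unfolding CAT0_space_def using cone_geodesic_space[OF geo] cone_delta_cat0 by blast

end

section \<open>The optimal CAT(0) defect of balls\<close>

text \<open>Every triangle with vertices in a ball of radius \<open>r\<close> is \<open>6 r\<close>-CAT(0): its sides stay
  within \<open>3 r\<close> of the centre.  Hence the optimal defect below is finite.\<close>
lemma delta_cat0_on_ball_6r: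
  assumes "r > 0"
  shows "delta_cat0_on UNIV dist (6 * r) (ball (c::'a::metric_space) r)"
  unfolding delta_cat0_on_metric_iff delta_cat0_sides_def
proof (intro ballI allI impI)
  fix x1 x2 x3 :: 'a and g1 g2 g3 k k' s t
  assume x: "x1 \<in> ball c r" "x2 \<in> ball c r" "x3 \<in> ball c r"
    and g: "geodesic_seg UNIV dist g1 x1 x2 \<and> geodesic_seg UNIV dist g2 x2 x3 \<and> geodesic_seg UNIV dist g3 x3 x1"
    and k: "k < 3" "k' < 3" and s: "s \<in> {0..sel3 k (dist x1 x2) (dist x2 x3) (dist x3 x1)}"
    and t: "t \<in> {0..sel3 k' (dist x1 x2) (dist x2 x3) (dist x3 x1)}"
  have near: "dist (sel3 j g1 g2 g3 u) c < 3 * r"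
    if "j < 3" "u \<in> {0..sel3 j (dist x1 x2) (dist x2 x3) (dist x3 x1)}" for j u
  proof -
    define p q where "p = sel3 j x1 x2 x3" and "q = sel3 j x2 x3 x1"
    have pq: "p \<in> ball c r" "q \<in> ball c r"
      unfolding p_def q_def by (intro sel3_in x)+
    have geo: "geodesic_seg UNIV dist (sel3 j g1 g2 g3) p q"
      unfolding p_def q_def using g by (intro geodesic_seg_sel3 that) auto
    have u: "u \<in> {0..dist p q}"
      using that unfolding p_def q_def by (simp add: sel3_comp[of _ dist])
    have "dist (sel3 j g1 g2 g3 u) c \<le> u + dist p c"
      using dist_triangle[of "sel3 j g1 g2 g3 u" c p] geodesic_seg_dist_start[OF geo u] by simp
    also have "\<dots> \<le> dist p q + dist p c" using u by simp
    also have "\<dots> \<le> (dist p c + dist c q) + dist p c" using dist_triangle[of p q c] by simp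
    also have "\<dots> < 3 * r" using pq by (simp add: dist_commute)
    finally show ?thesis .
  qed
  have "dist (sel3 k g1 g2 g3 s) (sel3 k' g1 g2 g3 t) \<le> dist (sel3 k g1 g2 g3 s) c + dist (sel3 k' g1 g2 g3 t) c"
    by (rule dist_triangle2)
  also have "\<dots> \<le> 6 * r" using near[OF k(1) s] near[OF k(2) t] by simp
  finally show "dist (sel3 k g1 g2 g3 s) (sel3 k' g1 g2 g3 t)
      \<le> cmp_bound (dist x1 x2) (dist x2 x3) (dist x3 x1) k s k' t + 6 * r"
    using cmp_bound_metric_nonneg[OF k, of x1 x2 x3 s t] by linarith
qed

lemma delta_cat0_on_Inf:
  assumes "D \<noteq> {}" and "\<And>\<delta>. \<delta> \<in> D \<Longrightarrow> delta_cat0_on M dist \<delta> (V :: 'a::metric_space set)"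
  shows "delta_cat0_on M dist (Inf D) V"
  unfolding delta_cat0_on_metric_iff delta_cat0_sides_def
proof (intro ballI allI impI)
  fix x1 x2 x3 g1 g2 g3 k k' s t
  assume "x1 \<in> V" "x2 \<in> V" "x3 \<in> V"
    "geodesic_seg M dist g1 x1 x2 \<and> geodesic_seg M dist g2 x2 x3 \<and> geodesic_seg M dist g3 x3 x1"
    "k < 3" "k' < 3" "s \<in> {0..sel3 k (dist x1 x2) (dist x2 x3) (dist x3 x1)}"
    "t \<in> {0..sel3 k' (dist x1 x2) (dist x2 x3) (dist x3 x1)}"
  then have "dist (sel3 k g1 g2 g3 s) (sel3 k' g1 g2 g3 t) - cmp_bound (dist x1 x2) (dist x2 x3) (dist x3 x1) k s k' t \<le> \<delta>"
    if "\<delta> \<in> D" for \<delta>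
    using assms(2)[OF that] unfolding delta_cat0_on_metric_iff delta_cat0_sides_def by fastforce
  then have "dist (sel3 k g1 g2 g3 s) (sel3 k' g1 g2 g3 t) - cmp_bound (dist x1 x2) (dist x2 x3) (dist x3 x1) k s k' t \<le> Inf D"
    by (intro cInf_greatest assms(1))
  then show "dist (sel3 k g1 g2 g3 s) (sel3 k' g1 g2 g3 t) \<le> cmp_bound (dist x1 x2) (dist x2 x3) (dist x3 x1) k s k' t + Inf D"
    by simp
qed

definition cat0_defect :: "'a::metric_space itself \<Rightarrow> real \<Rightarrow> real" where
  "cat0_defect X r = Inf {\<delta>. 0 \<le> \<delta> \<and> (\<forall>c::'a. delta_cat0_on UNIV dist \<delta> (ball c r))}"

lemma cat0_defect:
  assumes "r > 0"
  shows "0 \<le> cat0_defect TYPE('a::metric_space) r"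
    and "delta_cat0_on UNIV dist (cat0_defect TYPE('a) r) (ball (c::'a) r)"
    and "0 \<le> \<delta> \<Longrightarrow> (\<And>c::'a. delta_cat0_on UNIV dist \<delta> (ball c r)) \<Longrightarrow> cat0_defect TYPE('a) r \<le> \<delta>"
proof -
  define D where "D = {\<delta>. 0 \<le> \<delta> \<and> (\<forall>c::'a. delta_cat0_on UNIV dist \<delta> (ball c r))}"
  have "6 * r \<in> D"
    unfolding D_def using delta_cat0_on_ball_6r assms by auto
  then have ne: "D \<noteq> {}" by blast
  have bdd: "bdd_below D"
    unfolding D_def by (auto intro: bdd_belowI[of _ 0])
  show "0 \<le> cat0_defect TYPE('a) r"
    unfolding cat0_defect_def D_def[symmetric] using ne by (rule cInf_greatest) (simp add: D_def)
  show "delta_cat0_on UNIV dist (cat0_defect TYPE('a) r) (ball c r)"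
    unfolding cat0_defect_def D_def[symmetric] using ne by (rule delta_cat0_on_Inf) (simp add: D_def)
  show "cat0_defect TYPE('a) r \<le> \<delta>"
    if "0 \<le> \<delta>" "\<And>c::'a. delta_cat0_on UNIV dist \<delta> (ball c r)"
    unfolding cat0_defect_def D_def[symmetric] using that by (intro cInf_lower[OF _ bdd]) (simp add: D_def)
qed

section \<open>Asymptotically CAT(0) spaces are sublinearly CAT(0)\<close>

lemma violation_perturb:
  fixes x1 x2 x3 :: "'a::metric_space"
  assumes g: "geodesic_seg UNIV dist g1 x1 x2" "geodesic_seg UNIV dist g2 x2 x3" "geodesic_seg UNIV dist g3 x3 x1"
    and k: "k < 3" "k' < 3"
    and s: "s \<in> {0..sel3 k (dist x1 x2) (dist x2 x3) (dist x3 x1)}" "\<sigma> \<in> {0..sel3 k (dist x1 x2) (dist x2 x3) (dist x3 x1)}"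
    and t: "t \<in> {0..sel3 k' (dist x1 x2) (dist x2 x3) (dist x3 x1)}" "\<tau> \<in> {0..sel3 k' (dist x1 x2) (dist x2 x3) (dist x3 x1)}"
    and viol: "dist (sel3 k g1 g2 g3 s) (sel3 k' g1 g2 g3 t) > cmp_bound (dist x1 x2) (dist x2 x3) (dist x3 x1) k s k' t + \<eta>"
  shows "cmp_bound (dist x1 x2) (dist x2 x3) (dist x3 x1) k \<sigma> k' \<tau> + \<eta> - 2 * (\<bar>s - \<sigma>\<bar> + \<bar>t - \<tau>\<bar>)
    \<le> dist (sel3 k g1 g2 g3 \<sigma>) (sel3 k' g1 g2 g3 \<tau>)"
proof -
  have side: "dist (sel3 j g1 g2 g3 u) (sel3 j g1 g2 g3 v) = \<bar>u - v\<bar>"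
    if "j < 3" "u \<in> {0..sel3 j (dist x1 x2) (dist x2 x3) (dist x3 x1)}"
      "v \<in> {0..sel3 j (dist x1 x2) (dist x2 x3) (dist x3 x1)}" for j u v
    using geodesic_seg_dist[OF geodesic_seg_sel3[OF that(1) g]] that(2,3) by (simp add: sel3_comp[of _ dist])
  have tri: "dist (sel3 k g1 g2 g3 s) (sel3 k' g1 g2 g3 t) \<le> dist (sel3 k g1 g2 g3 s) (sel3 k g1 g2 g3 \<sigma>)
      + dist (sel3 k g1 g2 g3 \<sigma>) (sel3 k' g1 g2 g3 \<tau>) + dist (sel3 k' g1 g2 g3 \<tau>) (sel3 k' g1 g2 g3 t)"
    using dist_triangle[of "sel3 k g1 g2 g3 s" "sel3 k' g1 g2 g3 t" "sel3 k g1 g2 g3 \<sigma>"]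
      dist_triangle[of "sel3 k g1 g2 g3 \<sigma>" "sel3 k' g1 g2 g3 t" "sel3 k' g1 g2 g3 \<tau>"] by linarith
  have perturb: "cmp_bound (dist x1 x2) (dist x2 x3) (dist x3 x1) k \<sigma> k' \<tau> \<le>
      cmp_bound (dist x1 x2) (dist x2 x3) (dist x3 x1) k s k' t + \<bar>s - \<sigma>\<bar> + \<bar>t - \<tau>\<bar>"
    by (rule cmp_bound_perturb[OF k zero_le_dist zero_le_dist metric_triangle_ineqs])
  have "dist (sel3 k g1 g2 g3 s) (sel3 k g1 g2 g3 \<sigma>) + dist (sel3 k' g1 g2 g3 \<tau>) (sel3 k' g1 g2 g3 t)
      = \<bar>s - \<sigma>\<bar> + \<bar>t - \<tau>\<bar>"
    using side[OF k(1) s] side[OF k(2) t(2,1)] by (simp add: abs_minus_commute)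
  with tri perturb viol show ?thesis by argo
qed

context asymptotic_cone
begin

lemma rescaled_parameter_limit:
  assumes L: "((\<lambda>n. L1 n / a n) \<longlongrightarrow> l1) U" "((\<lambda>n. L2 n / a n) \<longlongrightarrow> l2) U" "((\<lambda>n. L3 n / a n) \<longlongrightarrow> l3) U"
    and nonneg: "\<And>n. 0 \<le> L1 n" "\<And>n. 0 \<le> L2 n" "\<And>n. 0 \<le> L3 n"
    and s: "\<And>n. s n \<in> {0..sel3 (k n) (L1 n) (L2 n) (L3 n)}" and k: "eventually (\<lambda>n. k n = K) U"
  obtains s' where "((\<lambda>n. s n / a n) \<longlongrightarrow> s') U" "s' \<in> {0..sel3 K l1 l2 l3}"
proof -
  have side_lim: "((\<lambda>n. sel3 K (L1 n) (L2 n) (L3 n) / a n) \<longlongrightarrow> sel3 K l1 l2 l3) U"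
    unfolding sel3_divide by (intro tendsto_sel3 L)
  have "eventually (\<lambda>n. (L1 n + L2 n + L3 n) / a n < l1 + l2 + l3 + 1) U"
    using order_tendstoD(2)[OF tendsto_add[OF tendsto_add[OF L(1,2)] L(3)]]
    by (simp add: add_divide_distrib)
  then have "eventually (\<lambda>n. \<bar>s n / a n\<bar> \<le> l1 + l2 + l3 + 1) U"
  proof eventually_elim
    case (elim n)
    have "s n \<le> L1 n + L2 n + L3 n"
      using s[of n] sel3_le_sum[OF nonneg(1)[of n] nonneg(2)[of n] nonneg(3)[of n], of "k n"] by simp
    then have "s n / a n \<le> (L1 n + L2 n + L3 n) / a n"
      using a_pos[of n] by (simp add: divide_right_mono)
    then show ?case using elim s[of n] a_pos[of n] by simp
  qed
  then have lim: "((\<lambda>n. s n / a n) \<longlongrightarrow> Lim U (\<lambda>n. s n / a n)) U"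
    by (rule ultrafilter_bounded_tendsto[OF ultra])
  moreover have "0 \<le> Lim U (\<lambda>n. s n / a n)"
    by (rule tendsto_lowerbound[OF lim]) (use s a_pos in \<open>auto intro!: always_eventually simp: less_imp_le U_proper\<close>)
  moreover have "eventually (\<lambda>n. s n / a n \<le> sel3 K (L1 n) (L2 n) (L3 n) / a n) U"
    using k by eventually_elim (use s a_pos in \<open>auto intro: divide_right_mono simp: less_imp_le\<close>)
  then have "Lim U (\<lambda>n. s n / a n) \<le> sel3 K l1 l2 l3"
    by (intro tendsto_le[OF U_proper side_lim lim])
  ultimately show ?thesis using that by simp
qed

lemma cone_cat0_bound:
  assumes CAT: "CAT0_space (cone_pts U a e) (cone_dist U a)"
    and x: "x1 \<in> S" "x2 \<in> S" "x3 \<in> S"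
    and G: "\<And>n. geodesic_seg UNIV dist (G1 n) (x1 n) (x2 n)" "\<And>n. geodesic_seg UNIV dist (G2 n) (x2 n) (x3 n)"
      "\<And>n. geodesic_seg UNIV dist (G3 n) (x3 n) (x1 n)"
    and k: "k < 3" "k' < 3"
    and s: "s \<in> {0..sel3 k (pd x1 x2) (pd x2 x3) (pd x3 x1)}"
    and t: "t \<in> {0..sel3 k' (pd x1 x2) (pd x2 x3) (pd x3 x1)}"
  shows "pd (geo_pt (sel3 k G1 G2 G3) (sel3 k x1 x2 x3) (sel3 k x2 x3 x1) s)
      (geo_pt (sel3 k' G1 G2 G3) (sel3 k' x1 x2 x3) (sel3 k' x2 x3 x1) t)
    \<le> cmp_bound (pd x1 x2) (pd x2 x3) (pd x3 x1) k s k' t"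
proof -
  define P where "P j = geo_pt (sel3 j G1 G2 G3) (sel3 j x1 x2 x3) (sel3 j x2 x3 x1)" for j
  define \<Gamma> where "\<Gamma> j \<sigma> = cls (P j \<sigma>)" for j \<sigma>
  have side_geo: "\<And>n. geodesic_seg UNIV dist (sel3 j G1 G2 G3 n) (sel3 j x1 x2 x3 n) (sel3 j x2 x3 x1 n)"
    if "j < 3" for j
    by (rule geodesic_seg_sel3_seq[OF that G])
  have P_S: "P j \<sigma> \<in> S" if "j < 3" "0 \<le> \<sigma>" for j \<sigma>
    unfolding P_def using x by (intro geo_pt_in_S side_geo that sel3_in)
  have \<Gamma>_geo: "geodesic_seg (cone_pts U a e) (cone_dist U a) (\<Gamma> j) (cls (sel3 j x1 x2 x3)) (cls (sel3 j x2 x3 x1))"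
    if "j < 3" for j
    unfolding \<Gamma>_def P_def using x by (intro cone_geodesic_seg side_geo that sel3_in)
  have "geodesic_seg (cone_pts U a e) (cone_dist U a) (\<Gamma> 0) (cls x1) (cls x2)"
    "geodesic_seg (cone_pts U a e) (cone_dist U a) (\<Gamma> 1) (cls x2) (cls x3)"
    "geodesic_seg (cone_pts U a e) (cone_dist U a) (\<Gamma> 2) (cls x3) (cls x1)"
    using \<Gamma>_geo[of 0] \<Gamma>_geo[of 1] \<Gamma>_geo[of 2] by simp_all
  then have "delta_cat0_triangle (cone_pts U a e) (cone_dist U a) 0 (cls x1) (cls x2) (cls x3) (\<Gamma> 0) (\<Gamma> 1) (\<Gamma> 2)"
    using CAT x cls_in_cone unfolding CAT0_space_def delta_cat0_on_def by blast
  then have "delta_cat0_sides (cone_dist U a) 0 (cls x1) (cls x2) (cls x3) (\<Gamma> 0) (\<Gamma> 1) (\<Gamma> 2)"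
    using cone_triangle_ineqs[OF x] by (intro delta_cat0_triangleD) (simp_all add: cone_dist_cls x)
  then have "cone_dist U a (sel3 k (\<Gamma> 0) (\<Gamma> 1) (\<Gamma> 2) s) (sel3 k' (\<Gamma> 0) (\<Gamma> 1) (\<Gamma> 2) t)
      \<le> cmp_bound (pd x1 x2) (pd x2 x3) (pd x3 x1) k s k' t + 0"
    using delta_cat0_sidesD[OF _ k, of "cone_dist U a" 0 "cls x1" "cls x2" "cls x3"] s t
    by (simp add: cone_dist_cls x)
  moreover have "sel3 j (\<Gamma> 0) (\<Gamma> 1) (\<Gamma> 2) = \<Gamma> j" if "j < 3" for j
    using that unfolding less_3_cases by auto
  ultimately show ?thesis
    using s t k cone_dist_cls[OF P_S P_S] unfolding \<Gamma>_def P_def by simp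
qed

lemma violation_limit:
  assumes x: "x1 \<in> S" "x2 \<in> S" "x3 \<in> S"
    and g: "\<And>n. geodesic_seg UNIV dist (g1 n) (x1 n) (x2 n)" "\<And>n. geodesic_seg UNIV dist (g2 n) (x2 n) (x3 n)"
      "\<And>n. geodesic_seg UNIV dist (g3 n) (x3 n) (x1 n)"
    and K: "K < 3" "K' < 3" "eventually (\<lambda>n. k n = K \<and> k' n = K') U"
    and s: "\<And>n. s n \<in> {0..sel3 (k n) (dist (x1 n) (x2 n)) (dist (x2 n) (x3 n)) (dist (x3 n) (x1 n))}"
      "((\<lambda>n. s n / a n) \<longlongrightarrow> s') U" "s' \<in> {0..sel3 K (pd x1 x2) (pd x2 x3) (pd x3 x1)}"
    and t: "\<And>n. t n \<in> {0..sel3 (k' n) (dist (x1 n) (x2 n)) (dist (x2 n) (x3 n)) (dist (x3 n) (x1 n))}"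
      "((\<lambda>n. t n / a n) \<longlongrightarrow> t') U" "t' \<in> {0..sel3 K' (pd x1 x2) (pd x2 x3) (pd x3 x1)}"
    and viol: "\<And>n. dist (sel3 (k n) (g1 n) (g2 n) (g3 n) (s n)) (sel3 (k' n) (g1 n) (g2 n) (g3 n) (t n)) >
      cmp_bound (dist (x1 n) (x2 n)) (dist (x2 n) (x3 n)) (dist (x3 n) (x1 n)) (k n) (s n) (k' n) (t n) + \<epsilon> * a n"
  shows "cmp_bound (pd x1 x2) (pd x2 x3) (pd x3 x1) K s' K' t' + \<epsilon> \<le>
    pd (geo_pt (sel3 K g1 g2 g3) (sel3 K x1 x2 x3) (sel3 K x2 x3 x1) s')
       (geo_pt (sel3 K' g1 g2 g3) (sel3 K' x1 x2 x3) (sel3 K' x2 x3 x1) t')"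
proof -
  define L1 L2 L3 where "L1 n = dist (x1 n) (x2 n)" and "L2 n = dist (x2 n) (x3 n)"
    and "L3 n = dist (x3 n) (x1 n)" for n
  define p q where "p = geo_pt (sel3 K g1 g2 g3) (sel3 K x1 x2 x3) (sel3 K x2 x3 x1) s'"
    and "q = geo_pt (sel3 K' g1 g2 g3) (sel3 K' x1 x2 x3) (sel3 K' x2 x3 x1) t'"
  text \<open>The points \<open>p n\<close>, \<open>q n\<close> sit at arclengths \<open>\<sigma> n\<close>, \<open>\<tau> n\<close> with \<open>\<sigma> n - s n = o(a n)\<close>.\<close>
  define \<sigma> \<tau> where "\<sigma> n = min (s' * a n) (sel3 K (L1 n) (L2 n) (L3 n))"
    and "\<tau> n = min (t' * a n) (sel3 K' (L1 n) (L2 n) (L3 n))" for n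
  have pq: "p n = sel3 K (g1 n) (g2 n) (g3 n) (\<sigma> n)" "q n = sel3 K' (g1 n) (g2 n) (g3 n) (\<tau> n)" for n
    unfolding p_def q_def geo_pt_def \<sigma>_def \<tau>_def L1_def L2_def L3_def sel3_apply
    by (simp_all add: sel3_comp[of _ dist])
  have pS: "p \<in> S" and qS: "q \<in> S"
    unfolding p_def q_def using s(3) t(3) x
    by (auto intro!: geo_pt_in_S geodesic_seg_sel3_seq[OF _ g] K sel3_in)
  have side_lim: "((\<lambda>n. sel3 j (dist (x1 n) (x2 n)) (dist (x2 n) (x3 n)) (dist (x3 n) (x1 n)) / a n)
      \<longlongrightarrow> sel3 j (pd x1 x2) (pd x2 x3) (pd x3 x1)) U" for j
    unfolding sel3_divide by (intro tendsto_sel3 pd_tendsto x)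
  define R where "R n = cmp_bound (L1 n) (L2 n) (L3 n) K (\<sigma> n) K' (\<tau> n) / a n + \<epsilon>
      - 2 * (\<bar>s n / a n - \<sigma> n / a n\<bar> + \<bar>t n / a n - \<tau> n / a n\<bar>)" for n
  have "eventually (\<lambda>n. R n \<le> dist (p n) (q n) / a n) U"
    using K(3)
  proof eventually_elim
    case (elim n)
    have "0 \<le> sel3 j (L1 n) (L2 n) (L3 n)" for j
      unfolding L1_def L2_def L3_def by (intro sel3_nonneg) auto
    then have "cmp_bound (L1 n) (L2 n) (L3 n) K (\<sigma> n) K' (\<tau> n) + \<epsilon> * a n - 2 * (\<bar>s n - \<sigma> n\<bar> + \<bar>t n - \<tau> n\<bar>)
        \<le> dist (p n) (q n)"
      unfolding pq L1_def L2_def L3_def using elim s(1)[of n] t(1)[of n] viol[of n] s(3) t(3) a_pos[of n]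
      by (intro violation_perturb g K(1,2)) (auto simp: \<sigma>_def \<tau>_def L1_def L2_def L3_def)
    moreover have "\<bar>u / a n - v / a n\<bar> = \<bar>u - v\<bar> / a n" for u v
      using a_pos[of n] by (simp add: diff_divide_distrib[symmetric] abs_div)
    then have "R n = (cmp_bound (L1 n) (L2 n) (L3 n) K (\<sigma> n) K' (\<tau> n) + \<epsilon> * a n
        - 2 * (\<bar>s n - \<sigma> n\<bar> + \<bar>t n - \<tau> n\<bar>)) / a n"
      unfolding R_def using a_pos[of n] by (simp add: diff_divide_distrib add_divide_distrib)
    ultimately show ?case
      using a_pos[of n] by (simp add: divide_right_mono)
  qed
  moreover have "(R \<longlongrightarrow> cmp_bound (pd x1 x2) (pd x2 x3) (pd x3 x1) K s' K' t' + \<epsilon>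
      - 2 * (\<bar>s' - min s' (sel3 K (pd x1 x2) (pd x2 x3) (pd x3 x1))\<bar>
        + \<bar>t' - min t' (sel3 K' (pd x1 x2) (pd x2 x3) (pd x3 x1))\<bar>)) U"
    unfolding R_def[abs_def] \<sigma>_def \<tau>_def L1_def L2_def L3_def using s(3) t(3)
    by (intro tendsto_intros tendsto_cmp_bound_rescaled tendsto_min_rescaled side_lim pd_tendsto x s(2) t(2)
        zero_le_dist) auto
  ultimately have "cmp_bound (pd x1 x2) (pd x2 x3) (pd x3 x1) K s' K' t' + \<epsilon>
      - 2 * (\<bar>s' - min s' (sel3 K (pd x1 x2) (pd x2 x3) (pd x3 x1))\<bar>
        + \<bar>t' - min t' (sel3 K' (pd x1 x2) (pd x2 x3) (pd x3 x1))\<bar>) \<le> pd p q"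
    by (intro tendsto_le[OF U_proper pd_tendsto[OF pS qS]])
  then show ?thesis
    unfolding p_def q_def using s(3) t(3) by simp
qed

lemma no_linear_violation:
  assumes CAT: "CAT0_space (cone_pts U a e) (cone_dist U a)" and "\<epsilon> > 0"
    and x: "x1 \<in> S" "x2 \<in> S" "x3 \<in> S"
    and g: "\<And>n. geodesic_seg UNIV dist (g1 n) (x1 n) (x2 n)" "\<And>n. geodesic_seg UNIV dist (g2 n) (x2 n) (x3 n)"
      "\<And>n. geodesic_seg UNIV dist (g3 n) (x3 n) (x1 n)"
    and k: "\<And>n. k n < 3" "\<And>n. k' n < 3"
    and s: "\<And>n. s n \<in> {0..sel3 (k n) (dist (x1 n) (x2 n)) (dist (x2 n) (x3 n)) (dist (x3 n) (x1 n))}"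
    and t: "\<And>n. t n \<in> {0..sel3 (k' n) (dist (x1 n) (x2 n)) (dist (x2 n) (x3 n)) (dist (x3 n) (x1 n))}"
    and viol: "\<And>n. dist (sel3 (k n) (g1 n) (g2 n) (g3 n) (s n)) (sel3 (k' n) (g1 n) (g2 n) (g3 n) (t n)) >
      cmp_bound (dist (x1 n) (x2 n)) (dist (x2 n) (x3 n)) (dist (x3 n) (x1 n)) (k n) (s n) (k' n) (t n) + \<epsilon> * a n"
  shows False
proof -
  obtain K where K: "K < 3" "eventually (\<lambda>n. k n = K) U"
    using ultrafilter_finite_choice[OF ultra, of "{..<3}" k] k by auto
  obtain K' where K': "K' < 3" "eventually (\<lambda>n. k' n = K') U"
    using ultrafilter_finite_choice[OF ultra, of "{..<3}" k'] k by auto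
  note L_lim = pd_tendsto[OF x(1,2)] pd_tendsto[OF x(2,3)] pd_tendsto[OF x(3,1)]
  obtain s' where s': "((\<lambda>n. s n / a n) \<longlongrightarrow> s') U" "s' \<in> {0..sel3 K (pd x1 x2) (pd x2 x3) (pd x3 x1)}"
    using rescaled_parameter_limit[OF L_lim zero_le_dist zero_le_dist zero_le_dist s K(2)] by blast
  obtain t' where t': "((\<lambda>n. t n / a n) \<longlongrightarrow> t') U" "t' \<in> {0..sel3 K' (pd x1 x2) (pd x2 x3) (pd x3 x1)}"
    using rescaled_parameter_limit[OF L_lim zero_le_dist zero_le_dist zero_le_dist t K'(2)] by blast
  have "cmp_bound (pd x1 x2) (pd x2 x3) (pd x3 x1) K s' K' t' + \<epsilon> \<le>
      cmp_bound (pd x1 x2) (pd x2 x3) (pd x3 x1) K s' K' t'"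
    using violation_limit[OF x g K(1) K'(1) eventually_conj[OF K(2) K'(2)] s s' t t' viol]
      cone_cat0_bound[OF CAT x g K(1) K'(1) s'(2) t'(2)] by linarith
  then show False using \<open>\<epsilon> > 0\<close> by simp
qed

end

lemma not_delta_cat0_on_metric:
  assumes "\<not> delta_cat0_on M dist \<delta> (V :: 'a::metric_space set)"
  shows "\<exists>x1 x2 x3 g1 g2 g3 k k' s t. x1 \<in> V \<and> x2 \<in> V \<and> x3 \<in> V \<and>
    geodesic_seg M dist g1 x1 x2 \<and> geodesic_seg M dist g2 x2 x3 \<and> geodesic_seg M dist g3 x3 x1 \<and>
    k < 3 \<and> k' < 3 \<and> s \<in> {0..sel3 k (dist x1 x2) (dist x2 x3) (dist x3 x1)} \<and>
    t \<in> {0..sel3 k' (dist x1 x2) (dist x2 x3) (dist x3 x1)} \<and>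
    dist (sel3 k g1 g2 g3 s) (sel3 k' g1 g2 g3 t) > cmp_bound (dist x1 x2) (dist x2 x3) (dist x3 x1) k s k' t + \<delta>"
proof -
  obtain x1 x2 x3 g1 g2 g3 where x: "x1 \<in> V" "x2 \<in> V" "x3 \<in> V"
    and g: "geodesic_seg M dist g1 x1 x2" "geodesic_seg M dist g2 x2 x3" "geodesic_seg M dist g3 x3 x1"
    and "\<not> delta_cat0_sides dist \<delta> x1 x2 x3 g1 g2 g3"
    using assms unfolding delta_cat0_on_metric_iff by blast
  then obtain k k' s t where "k < 3" "k' < 3" "s \<in> {0..sel3 k (dist x1 x2) (dist x2 x3) (dist x3 x1)}"
    "t \<in> {0..sel3 k' (dist x1 x2) (dist x2 x3) (dist x3 x1)}"
    and "\<not> dist (sel3 k g1 g2 g3 s) (sel3 k' g1 g2 g3 t) \<le> cmp_bound (dist x1 x2) (dist x2 x3) (dist x3 x1) k s k' t + \<delta>"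
    unfolding delta_cat0_sides_def by blast
  moreover from this(5) have "dist (sel3 k g1 g2 g3 s) (sel3 k' g1 g2 g3 t) > cmp_bound (dist x1 x2) (dist x2 x3) (dist x3 x1) k s k' t + \<delta>"
    by simp
  ultimately show ?thesis
    using x g by blast
qed

text \<open>In an asymptotically CAT(0) space, balls of radii \<open>r n \<rightarrow> \<infinity>\<close> cannot all fail to be
  \<open>\<epsilon> r n\<close>-CAT(0): violating triangles would survive in the asymptotic cone with base points
  the centres and scaling factors the radii.\<close>
lemma asymptotically_CAT0_no_linear_defect:
  assumes AC: "asymptotically_CAT0 TYPE('a::metric_space)"
    and r: "\<And>n. r n > 0" "filterlim r at_top sequentially" and "\<epsilon> > 0"
  shows "\<exists>n. \<forall>c::'a. delta_cat0_on UNIV dist (\<epsilon> * r n) (ball c (r n))"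
proof (rule ccontr)
  assume no_small: "\<not> ?thesis"
  have "\<forall>n. \<exists>(c::'a) x1 x2 x3 g1 g2 g3 k k' s t. x1 \<in> ball c (r n) \<and> x2 \<in> ball c (r n) \<and> x3 \<in> ball c (r n) \<and>
      geodesic_seg UNIV dist g1 x1 x2 \<and> geodesic_seg UNIV dist g2 x2 x3 \<and> geodesic_seg UNIV dist g3 x3 x1 \<and>
      k < 3 \<and> k' < 3 \<and> s \<in> {0..sel3 k (dist x1 x2) (dist x2 x3) (dist x3 x1)} \<and>
      t \<in> {0..sel3 k' (dist x1 x2) (dist x2 x3) (dist x3 x1)} \<and>
      dist (sel3 k g1 g2 g3 s) (sel3 k' g1 g2 g3 t) > cmp_bound (dist x1 x2) (dist x2 x3) (dist x3 x1) k s k' t + \<epsilon> * r n"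
  proof
    fix n
    obtain c :: 'a where "\<not> delta_cat0_on UNIV dist (\<epsilon> * r n) (ball c (r n))"
      using no_small by blast
    from not_delta_cat0_on_metric[OF this] show "\<exists>(c::'a) x1 x2 x3 g1 g2 g3 k k' s t. x1 \<in> ball c (r n) \<and>
      x2 \<in> ball c (r n) \<and> x3 \<in> ball c (r n) \<and> geodesic_seg UNIV dist g1 x1 x2 \<and>
      geodesic_seg UNIV dist g2 x2 x3 \<and> geodesic_seg UNIV dist g3 x3 x1 \<and>
      k < 3 \<and> k' < 3 \<and> s \<in> {0..sel3 k (dist x1 x2) (dist x2 x3) (dist x3 x1)} \<and>
      t \<in> {0..sel3 k' (dist x1 x2) (dist x2 x3) (dist x3 x1)} \<and>
      dist (sel3 k g1 g2 g3 s) (sel3 k' g1 g2 g3 t) > cmp_bound (dist x1 x2) (dist x2 x3) (dist x3 x1) k s k' t + \<epsilon> * r n"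
      by (rule exI[of _ c])
  qed
  then obtain c :: "nat \<Rightarrow> 'a" and x1 x2 x3 g1 g2 g3 k k' s t where V: "\<forall>n. x1 n \<in> ball (c n) (r n) \<and>
      x2 n \<in> ball (c n) (r n) \<and> x3 n \<in> ball (c n) (r n) \<and>
      geodesic_seg UNIV dist (g1 n) (x1 n) (x2 n) \<and> geodesic_seg UNIV dist (g2 n) (x2 n) (x3 n) \<and>
      geodesic_seg UNIV dist (g3 n) (x3 n) (x1 n) \<and> k n < 3 \<and> k' n < 3 \<and>
      s n \<in> {0..sel3 (k n) (dist (x1 n) (x2 n)) (dist (x2 n) (x3 n)) (dist (x3 n) (x1 n))} \<and>
      t n \<in> {0..sel3 (k' n) (dist (x1 n) (x2 n)) (dist (x2 n) (x3 n)) (dist (x3 n) (x1 n))} \<and>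
      dist (sel3 (k n) (g1 n) (g2 n) (g3 n) (s n)) (sel3 (k' n) (g1 n) (g2 n) (g3 n) (t n)) >
        cmp_bound (dist (x1 n) (x2 n)) (dist (x2 n) (x3 n)) (dist (x3 n) (x1 n)) (k n) (s n) (k' n) (t n) + \<epsilon> * r n"
    by metis
  obtain U :: "nat filter" where U: "ultrafilter U" "nonprincipal U"
    using nonprincipal_ultrafilter_exists by blast
  interpret asymptotic_cone U r c
    using U r by unfold_locales auto
  have CAT: "CAT0_space (cone_pts U r c) (cone_dist U r)"
    using AC U r unfolding asymptotically_CAT0_def by blast
  have x: "x1 \<in> S" "x2 \<in> S" "x3 \<in> S"
    using V by (blast intro: ball_seq_in_S)+
  show False
    by (rule no_linear_violation[OF CAT \<open>\<epsilon> > 0\<close> x, of g1 g2 g3 k k' s t]) (use V in blast)+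
qed

lemma cat0_defect_sublinear:
  assumes AC: "asymptotically_CAT0 TYPE('a::metric_space)"
  shows "((\<lambda>r. cat0_defect TYPE('a) r / r) \<longlongrightarrow> 0) at_top"
proof (rule ccontr)
  assume "\<not> ?thesis"
  then obtain \<epsilon> where "\<epsilon> > 0" and "\<not> eventually (\<lambda>r. dist (cat0_defect TYPE('a) r / r) 0 < \<epsilon>) at_top"
    unfolding tendsto_iff by blast
  then have "\<forall>n::nat. \<exists>r. real n + 1 \<le> r \<and> \<not> dist (cat0_defect TYPE('a) r / r) 0 < \<epsilon>"
    unfolding eventually_at_top_linorder by (meson not_le)
  then obtain r where r: "\<And>n. real n + 1 \<le> r n" "\<And>n. \<not> dist (cat0_defect TYPE('a) (r n) / r n) 0 < \<epsilon>"
    by metis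
  have r_pos: "r n > 0" for n
    using r(1)[of n] by (smt (verit) of_nat_0_le_iff)
  have r_lim: "filterlim r at_top sequentially"
    by (rule filterlim_at_top_mono[OF filterlim_real_sequentially])
      (use r(1) in \<open>auto intro!: always_eventually intro: order_trans[OF _ r(1)]\<close>)
  have "\<epsilon> / 2 > 0" using \<open>\<epsilon> > 0\<close> by simp
  then obtain n where n: "\<And>c::'a. delta_cat0_on UNIV dist (\<epsilon> / 2 * r n) (ball c (r n))"
    using asymptotically_CAT0_no_linear_defect[OF AC r_pos r_lim] by blast
  have "cat0_defect TYPE('a) (r n) \<le> \<epsilon> / 2 * r n"
    by (rule cat0_defect(3)[OF r_pos _ n]) (use \<open>\<epsilon> > 0\<close> r_pos[of n] in simp)
  moreover have "\<epsilon> * r n \<le> cat0_defect TYPE('a) (r n)"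
    using r(2)[of n] r_pos[of n] cat0_defect(1)[where 'a='a, OF r_pos[of n]]
    by (simp add: dist_real_def divide_simps)
  ultimately show False
    using mult_pos_pos[OF \<open>\<epsilon> > 0\<close> r_pos[of n]] by linarith
qed

theorem theorem3p3:
  assumes "geodesic_space (UNIV :: 'a::metric_space set) dist"
  shows "asymptotically_CAT0 TYPE('a) \<longleftrightarrow>
    (\<exists>f :: real \<Rightarrow> real. (\<forall>r>0. f r \<ge> 0) \<and> ((\<lambda>r. f r / r) \<longlongrightarrow> 0) at_top \<and>
       (\<forall>r>0. \<forall>c::'a. delta_cat0_on UNIV dist (f r) (ball c r)))"
proof
  assume "asymptotically_CAT0 TYPE('a)"
  then show "\<exists>f. (\<forall>r>0. f r \<ge> 0) \<and> ((\<lambda>r. f r / r) \<longlongrightarrow> 0) at_top \<and>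
      (\<forall>r>0. \<forall>c::'a. delta_cat0_on UNIV dist (f r) (ball c r))"
    using cat0_defect_sublinear cat0_defect(1,2) by blast
next
  assume "\<exists>f. (\<forall>r>0. f r \<ge> 0) \<and> ((\<lambda>r. f r / r) \<longlongrightarrow> 0) at_top \<and>
      (\<forall>r>0. \<forall>c::'a. delta_cat0_on UNIV dist (f r) (ball c r))"
  then obtain f where f: "((\<lambda>r. f r / r) \<longlongrightarrow> 0) at_top"
    "\<And>r c. r > 0 \<Longrightarrow> delta_cat0_on UNIV dist (f r) (ball (c::'a) r)"
    by blast
  show "asymptotically_CAT0 TYPE('a)"
    unfolding asymptotically_CAT0_def
  proof (intro allI impI)
    fix U :: "nat filter" and a :: "nat \<Rightarrow> real" and e :: "nat \<Rightarrow> 'a"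
    assume "ultrafilter U \<and> nonprincipal U \<and> (\<forall>n. 0 < a n) \<and> filterlim a at_top sequentially"
    then interpret sublinear_cat0 U a e f
      using assms f by unfold_locales auto
    show "CAT0_space (cone_pts U a e) (cone_dist U a)"
      by (rule cone_CAT0)
  qed
qed

end
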